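(* Assume the hypotheses of Theorem 3 (see context). Then for every $\eta>0$, $$\mathbb{P}\Big(|s_{j,n}^2-v_j|\le\eta\,v_j\ \text{ for all } j=1,\dots,m_n\Big)\ge 1-\frac{4C}{\eta^2}n^{-\varepsilon_1}\to1\quad(n\to\infty).$$ Consequently $\mathbb{P}\big(\tfrac{d_j}{2}\le d_{j,n}\le 2d_j\ \text{for all } j=1,\dots,m_n\big)\to1$ and $\mathbb{P}\big(|\sqrt n\,\delta_n'-\gamma|\le\gamma/2\big)\to1$ as $n\to\infty$, where $\gamma:=\sqrt{\sum_{j=1}^\infty d_j^2v_j}$.
   Context: Setting: $K:\mathcal{X}\to\mathcal{Y}$ compact linear between infinite-dimensional real separable Hilbert spaces, dense range, singular value decomposition $(\sigma_j,u_j,v_j)$ with $\sigma_j>0$ nonincreasing to $0$. $Y_1,Y_2,\dots$ are i.i.d. $\mathcal{Y}$-valued with $\mathbb{E}Y_1=\hat y$; $q>p-1>0$, $\sigma_j^2\asymp j^{-q}$, $0<v_j:=\mathbb{E}(Y_1-\hat y,u_j)^2\le C_pj^{-p}$, $\mathbb{E}(Y_1-\hat y,u_j)^4\le Cv_j^2$ for all $j$; $0<\varepsilon_1<1$, $0<\varepsilon_2<\min(1,p-1)$. $\bar Y_n:=\frac1n\sum_{i\le n}Y_i$, $m_n:=\lfloor n^{1-\varepsilon_1}\rfloor$, $s_{j,n}^2:=\frac1{n-1}\sum_{i=1}^n(Y_i-\bar Y_n,u_j)^2$, $S_n:=\sum_{j'=1}^{m_n}s_{j',n}^2$. Random weights: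 $d_{1,n}:=\sqrt{\min(S_n/s_{1,n}^2,1/\sigma_1^2)}$, $d_{j,n}:=\sqrt{\min(j^{-(1+\varepsilon_2)}S_n/s_{j,n}^2,\ \sigma_{j-1}^2d_{j-1,n}^2/\sigma_j^2)}$ for $2\le j\le m_n$; $\delta_n':=\sqrt{\frac1n\sum_{j=1}^{m_n}d_{j,n}^2s_{j,n}^2}$. Deterministic weights: $V:=\mathbb{E}\|Y_1-\hat y\|^2$, $d_1:=\sqrt{\min(V/v_1,1/\sigma_1^2)}$, $d_j:=\sqrt{\min(j^{-(1+\varepsilon_2)}V/v_j,\ \sigma_{j-1}^2d_{j-1}^2/\sigma_j^2)}$ for $j>1$. *)

theory Defs
  imports "HOL-Probability.Probability"
begin

definition compact_linear_op :: "('x::real_normed_vector \<Rightarrow> 'y::real_normed_vector) \<Rightarrow> bool" where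
  "compact_linear_op K \<longleftrightarrow> linear K \<and> compact (closure (K ` cball 0 1))"

text \<open>Generic recursion for the squared weights (indices start at 1):
  w 1 = min (S / s 1) (1 / sigma 1 ^ 2),
  w j = min (j powr (-(1+e)) * S / s j) (sigma (j-1)^2 * w (j-1) / sigma j ^ 2) for j >= 2.
  The weights of the paper are the square roots of these values.\<close>
fun wsq :: "(nat \<Rightarrow> real) \<Rightarrow> real \<Rightarrow> real \<Rightarrow> (nat \<Rightarrow> real) \<Rightarrow> nat \<Rightarrow> real" where
  "wsq \<sigma> e S s 0 = 0"
| "wsq \<sigma> e S s (Suc 0) = min (S / s 1) (1 / (\<sigma> 1)\<^sup>2)"
| "wsq \<sigma> e S s (Suc (Suc k)) =
     min (real (Suc (Suc k)) powr (-(1 + e)) * S / s (Suc (Suc k)))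
         ((\<sigma> (Suc k))\<^sup>2 * wsq \<sigma> e S s (Suc k) / (\<sigma> (Suc (Suc k)))\<^sup>2)"

text \<open>Weight function d_j (deterministic when S = V and s = v, random when S = S_n and s = s^2_{.,n}).\<close>
definition weight :: "(nat \<Rightarrow> real) \<Rightarrow> real \<Rightarrow> real \<Rightarrow> (nat \<Rightarrow> real) \<Rightarrow> nat \<Rightarrow> real" where
  "weight \<sigma> e S s j = sqrt (wsq \<sigma> e S s j)"

definition mcut :: "real \<Rightarrow> nat \<Rightarrow> nat" where
  "mcut \<epsilon>1 n = nat \<lfloor>real n powr (1 - \<epsilon>1)\<rfloor>"

definition sample_mean :: "(nat \<Rightarrow> 'a \<Rightarrow> 'y::real_vector) \<Rightarrow> nat \<Rightarrow> 'a \<Rightarrow> 'y" where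
  "sample_mean Y n \<omega> = (1 / real n) *\<^sub>R (\<Sum>i=1..n. Y i \<omega>)"

definition sample_var :: "(nat \<Rightarrow> 'a \<Rightarrow> 'y::real_inner) \<Rightarrow> (nat \<Rightarrow> 'y) \<Rightarrow> nat \<Rightarrow> nat \<Rightarrow> 'a \<Rightarrow> real" where
  "sample_var Y u n j \<omega> = (1 / (real n - 1)) * (\<Sum>i=1..n. ((Y i \<omega> - sample_mean Y n \<omega>) \<bullet> u j)\<^sup>2)"

definition sample_total :: "real \<Rightarrow> (nat \<Rightarrow> 'a \<Rightarrow> 'y::real_inner) \<Rightarrow> (nat \<Rightarrow> 'y) \<Rightarrow> nat \<Rightarrow> 'a \<Rightarrow> real" where
  "sample_total \<epsilon>1 Y u n \<omega> = (\<Sum>j=1..mcut \<epsilon>1 n. sample_var Y u n j \<omega>)"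

definition rand_weight :: "(nat \<Rightarrow> real) \<Rightarrow> real \<Rightarrow> real \<Rightarrow> (nat \<Rightarrow> 'a \<Rightarrow> 'y::real_inner) \<Rightarrow> (nat \<Rightarrow> 'y) \<Rightarrow> nat \<Rightarrow> nat \<Rightarrow> 'a \<Rightarrow> real" where
  "rand_weight \<sigma> \<epsilon>1 \<epsilon>2 Y u n j \<omega> =
     weight \<sigma> \<epsilon>2 (sample_total \<epsilon>1 Y u n \<omega>) (\<lambda>j'. sample_var Y u n j' \<omega>) j"

definition delta' :: "(nat \<Rightarrow> real) \<Rightarrow> real \<Rightarrow> real \<Rightarrow> (nat \<Rightarrow> 'a \<Rightarrow> 'y::real_inner) \<Rightarrow> (nat \<Rightarrow> 'y) \<Rightarrow> nat \<Rightarrow> 'a \<Rightarrow> real" where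
  "delta' \<sigma> \<epsilon>1 \<epsilon>2 Y u n \<omega> =
     sqrt ((1 / real n) * (\<Sum>j=1..mcut \<epsilon>1 n. (rand_weight \<sigma> \<epsilon>1 \<epsilon>2 Y u n j \<omega>)\<^sup>2 * sample_var Y u n j \<omega>))"

end

theory Submission
  imports Defs "HOL-Real_Asymp.Real_Asymp"
begin

text \<open>Each s_{j,n}^2 is the sample variance of the i.i.d. centred coordinates X_i = (Y_i - yhat, u_j).
  Writing it as the diagonal sum of X_i^2 - v_j minus the off-diagonal sum of X_i (X_1 + ... + X_{i-1}),
  whose summands are pairwise orthogonal, bounds its mean square error by 4 C v_j^2 / n; Chebyshev's
  inequality and a union bound over the m_n \<le> n^{1-\<epsilon>1} coordinates give the first estimate.

  Since K has dense range, the u_j span a dense subspace, so Parseval gives V = \<Sum> v_j, and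
  d_j^2 v_j \<le> V j^{-1-\<epsilon>2} makes \<gamma>^2 = \<Sum> d_j^2 v_j finite. For large n the sums truncated at m_n
  exceed 9/10 V and \<gamma>^2/2. On the event where every s_{j,n}^2 is within 10% of v_j, each ratio
  S_n / s_{j,n}^2 is then within a factor 3/2 of V / v_j, and the min-recursion defining the weights
  preserves this factor; this yields both remaining statements.\<close>

section \<open>Series and orthonormal expansions\<close>

lemma sums_imp_tendsto_sum_atLeastAtMost:
  "(\<lambda>i. g (Suc i)) sums S \<Longrightarrow> (\<lambda>N. \<Sum>j=1..N. g j) \<longlonglongrightarrow> S"
  by (simp add: sums_def sum.atLeast1_atMost_eq)

lemma sum_atLeastAtMost_le_sums:
  fixes g :: "nat \<Rightarrow> real"
  assumes "(\<lambda>i. g (Suc i)) sums S" "\<And>j. j \<ge> 1 \<Longrightarrow> 0 \<le> g j"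
  shows "(\<Sum>j=1..N. g j) \<le> S"
  using sum_le_suminf[OF sums_summable[OF assms(1)], of "{..<N}"] assms
  by (simp add: sum.atLeast1_atMost_eq sums_unique[symmetric])

lemma inner_sum_orthonormal:
  fixes u :: "nat \<Rightarrow> 'y::real_inner"
  assumes orth: "\<And>i j. i \<ge> 1 \<Longrightarrow> j \<ge> 1 \<Longrightarrow> u i \<bullet> u j = (if i = j then 1 else 0)"
    and k: "k \<in> {1..N}"
  shows "(\<Sum>j=1..N. c j *\<^sub>R u j) \<bullet> u k = c k"
proof -
  have "(\<Sum>j=1..N. c j *\<^sub>R u j) \<bullet> u k = (\<Sum>j=1..N. if j = k then c k else 0)"
    unfolding inner_sum_left by (rule sum.cong) (use k in \<open>auto simp: orth\<close>)
  then show ?thesis using k by simp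
qed

lemma norm_sub_projection_sq:
  fixes u :: "nat \<Rightarrow> 'y::real_inner"
  assumes orth: "\<And>i j. i \<ge> 1 \<Longrightarrow> j \<ge> 1 \<Longrightarrow> u i \<bullet> u j = (if i = j then 1 else 0)"
  shows "(norm (y - (\<Sum>j=1..N. (y \<bullet> u j) *\<^sub>R u j)))\<^sup>2 = (norm y)\<^sup>2 - (\<Sum>j=1..N. (y \<bullet> u j)\<^sup>2)"
proof -
  define P where "P = (\<Sum>j=1..N. (y \<bullet> u j) *\<^sub>R u j)"
  have coeff: "u k \<bullet> P = y \<bullet> u k" if "k \<in> {1..N}" for k
    using inner_sum_orthonormal[OF orth that] by (simp add: P_def inner_commute)
  have "y \<bullet> P = (\<Sum>j=1..N. (y \<bullet> u j)\<^sup>2)"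
    by (simp add: P_def inner_sum_right power2_eq_square)
  moreover have "P \<bullet> P = (\<Sum>j=1..N. (y \<bullet> u j)\<^sup>2)"
  proof -
    have "P \<bullet> P = (\<Sum>k=1..N. (y \<bullet> u k) * (u k \<bullet> P))"
      by (subst (1) P_def) (simp add: inner_sum_left)
    also have "\<dots> = (\<Sum>k=1..N. (y \<bullet> u k)\<^sup>2)"
      by (rule sum.cong) (simp_all add: coeff power2_eq_square)
    finally show ?thesis .
  qed
  moreover have "(norm (y - P))\<^sup>2 = y \<bullet> y - 2 * (y \<bullet> P) + P \<bullet> P"
    by (simp add: power2_norm_eq_inner inner_diff_left inner_diff_right inner_commute)
  ultimately show ?thesis
    unfolding P_def[symmetric] by (simp add: power2_norm_eq_inner)
qed

lemma norm_sub_projection_le: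
  fixes u :: "nat \<Rightarrow> 'y::real_inner"
  assumes orth: "\<And>i j. i \<ge> 1 \<Longrightarrow> j \<ge> 1 \<Longrightarrow> u i \<bullet> u j = (if i = j then 1 else 0)"
  shows "norm (y - (\<Sum>j=1..N. (y \<bullet> u j) *\<^sub>R u j)) \<le> norm (y - (\<Sum>k=1..N. c k *\<^sub>R u k))"
proof -
  define S where "S = (\<Sum>k=1..N. c k *\<^sub>R u k)"
  have "(\<Sum>j=1..N. (S \<bullet> u j) *\<^sub>R u j) = S"
    unfolding S_def by (rule sum.cong[OF refl], subst inner_sum_orthonormal[OF orth], simp_all)
  then have "y - (\<Sum>j=1..N. (y \<bullet> u j) *\<^sub>R u j) = (y - S) - (\<Sum>j=1..N. ((y - S) \<bullet> u j) *\<^sub>R u j)"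
    by (simp add: inner_diff_left scaleR_left_diff_distrib sum_subtractf)
  moreover have "(norm ((y - S) - (\<Sum>j=1..N. ((y - S) \<bullet> u j) *\<^sub>R u j)))\<^sup>2 \<le> (norm (y - S))\<^sup>2"
    using norm_sub_projection_sq[OF orth, of "y - S" N] sum_nonneg[of "{1..N}" "\<lambda>j. ((y - S) \<bullet> u j)\<^sup>2"]
    by simp
  ultimately show ?thesis unfolding S_def by (metis norm_ge_zero power2_le_imp_le)
qed

lemma parseval_dense_span:
  fixes u :: "nat \<Rightarrow> 'y::real_inner"
  assumes orth: "\<And>i j. i \<ge> 1 \<Longrightarrow> j \<ge> 1 \<Longrightarrow> u i \<bullet> u j = (if i = j then 1 else 0)"
    and dense: "\<And>\<epsilon>. \<epsilon> > 0 \<Longrightarrow> \<exists>c N. norm (y - (\<Sum>k=1..N. c k *\<^sub>R u k)) < \<epsilon>"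
  shows "(\<lambda>N. \<Sum>j=1..N. (y \<bullet> u j)\<^sup>2) \<longlonglongrightarrow> (norm y)\<^sup>2"
proof (rule LIMSEQ_I)
  fix r :: real assume r: "r > 0"
  obtain c N where "norm (y - (\<Sum>k=1..N. c k *\<^sub>R u k)) < sqrt r"
    using dense[of "sqrt r"] r by auto
  then have "norm (y - (\<Sum>j=1..N. (y \<bullet> u j) *\<^sub>R u j)) < sqrt r"
    using norm_sub_projection_le[OF orth, of y N c] by linarith
  then have "(norm (y - (\<Sum>j=1..N. (y \<bullet> u j) *\<^sub>R u j)))\<^sup>2 < r"
    using r by (metis norm_ge_zero real_sqrt_less_iff real_sqrt_unique)
  then have N: "(norm y)\<^sup>2 - (\<Sum>j=1..N. (y \<bullet> u j)\<^sup>2) < r"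
    using norm_sub_projection_sq[OF orth, of y N] by linarith
  show "\<exists>N. \<forall>n\<ge>N. norm ((\<Sum>j=1..n. (y \<bullet> u j)\<^sup>2) - (norm y)\<^sup>2) < r"
  proof (intro exI allI impI)
    fix n assume "n \<ge> N"
    then have "(\<Sum>j=1..N. (y \<bullet> u j)\<^sup>2) \<le> (\<Sum>j=1..n. (y \<bullet> u j)\<^sup>2)"
      by (intro sum_mono2) auto
    moreover have "(\<Sum>j=1..n. (y \<bullet> u j)\<^sup>2) \<le> (norm y)\<^sup>2"
      using norm_sub_projection_sq[OF orth, of y n] by (metis diff_ge_0_iff_ge zero_le_power2)
    ultimately show "norm ((\<Sum>j=1..n. (y \<bullet> u j)\<^sup>2) - (norm y)\<^sup>2) < r"
      using N by simp
  qed
qed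

lemma span_approx_of_dense_range:
  fixes K :: "'x \<Rightarrow> 'y::real_normed_vector" and a :: "'x \<Rightarrow> nat \<Rightarrow> real"
  assumes dense: "closure (range K) = UNIV"
    and expansion: "\<And>x. ((\<lambda>j. a x j *\<^sub>R u j) has_sum K x) {1..}"
    and \<epsilon>: "\<epsilon> > 0"
  shows "\<exists>c N. norm (y - (\<Sum>k=1..N. c k *\<^sub>R u k)) < \<epsilon>"
proof -
  obtain x where x: "dist (K x) y < \<epsilon> / 2"
    using dense \<epsilon> closure_approachable[of y "range K"] by (metis UNIV_I half_gt_zero rangeE)
  have "((\<lambda>j. a x j *\<^sub>R u j) has_sum K x) (Suc ` UNIV)"
    using expansion[of x] by (simp add: atLeast_Suc_greaterThan greaterThan_0)
  then have "(\<lambda>i. a x (Suc i) *\<^sub>R u (Suc i)) sums K x"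
    by (intro has_sum_imp_sums) (simp add: has_sum_reindex comp_def)
  then obtain N where N: "norm ((\<Sum>i<N. a x (Suc i) *\<^sub>R u (Suc i)) - K x) < \<epsilon> / 2"
    using \<epsilon> unfolding sums_def LIMSEQ_iff by (metis half_gt_zero order.refl)
  have "norm (y - (\<Sum>k=1..N. a x k *\<^sub>R u k)) \<le> dist (K x) y + norm ((\<Sum>i<N. a x (Suc i) *\<^sub>R u (Suc i)) - K x)"
    using norm_triangle_ineq4[of "y - K x" "(\<Sum>k=1..N. a x k *\<^sub>R u k) - K x"]
    by (simp add: sum.atLeast1_atMost_eq dist_norm norm_minus_commute algebra_simps)
  then show ?thesis
    using x N by (intro exI[of _ "a x"] exI[of _ N]) linarith
qed

section \<open>Mean square error of the sample variance\<close>

lemma power2_sum_eq_squares_plus_lower: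
  fixes x :: "nat \<Rightarrow> real"
  shows "(\<Sum>i=1..n. x i)\<^sup>2 = (\<Sum>i=1..n. (x i)\<^sup>2) + 2 * (\<Sum>i=1..n. x i * (\<Sum>k=1..<i. x k))"
proof (induction n)
  case (Suc n)
  have "{1..<Suc n} = {1..n}" by auto
  with Suc.IH show ?case by (simp add: power2_eq_square algebra_simps)
qed simp

lemma sample_variance_eq:
  fixes x :: "nat \<Rightarrow> real"
  assumes n: "n \<ge> 2"
  shows "(1/(real n - 1)) * (\<Sum>i=1..n. (x i - (1/real n) * (\<Sum>k=1..n. x k))\<^sup>2)
       = (1/real n) * (\<Sum>i=1..n. (x i)\<^sup>2) - (2/(real n * (real n - 1))) * (\<Sum>i=1..n. x i * (\<Sum>k=1..<i. x k))"
proof -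
  define T where "T = (\<Sum>k=1..n. x k)"
  define Q where "Q = (\<Sum>i=1..n. (x i)\<^sup>2)"
  define D where "D = (\<Sum>i=1..n. x i * (\<Sum>k=1..<i. x k))"
  have nr: "real n \<ge> 2" using n by simp
  have "(\<Sum>i=1..n. (x i - T / real n)\<^sup>2) = (\<Sum>i=1..n. (x i)\<^sup>2 - 2 * (T / real n) * x i + (T / real n)\<^sup>2)"
    by (rule sum.cong) (auto simp: power2_diff)
  also have "\<dots> = Q - 2 * (T / real n) * T + real n * (T / real n)\<^sup>2"
    by (simp add: sum.distrib sum_subtractf sum_distrib_left[symmetric] sum_divide_distrib[symmetric]
        Q_def T_def)
  also have "\<dots> = Q - T\<^sup>2 / real n"
    using nr by (simp add: power2_eq_square field_simps)
  also have "T\<^sup>2 = Q + 2 * D"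
    unfolding T_def Q_def D_def by (rule power2_sum_eq_squares_plus_lower)
  finally have E: "(\<Sum>i=1..n. (x i - T / real n)\<^sup>2) = Q - (Q + 2 * D) / real n" .
  have mean: "(1/real n) * T = T / real n" by simp
  show ?thesis
    unfolding T_def[symmetric] Q_def[symmetric] D_def[symmetric] mean E
    using nr by (simp add: field_simps)
qed

lemma sum_pred_atLeastAtMost: "(\<Sum>i=1..n. real (i - 1)) = real n * (real n - 1) / 2"
  by (induction n) (auto simp: field_simps of_nat_diff)

lemma abs_sum_le_card_mult:
  fixes F :: "nat \<Rightarrow> real"
  assumes "\<And>i. i \<in> I \<Longrightarrow> \<bar>F i\<bar> \<le> c"
  shows "\<bar>\<Sum>i\<in>I. F i\<bar> \<le> real (card I) * c"
proof -
  have "\<bar>\<Sum>i\<in>I. F i\<bar> \<le> (\<Sum>i\<in>I. \<bar>F i\<bar>)" by (rule sum_abs)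
  also have "\<dots> \<le> real (card I) * c" by (rule sum_bounded_above) (use assms in auto)
  finally show ?thesis .
qed

lemma abs_power_le_one_plus_power:
  fixes x :: real
  assumes "k \<le> m"
  shows "\<bar>x\<bar> ^ k \<le> 1 + \<bar>x\<bar> ^ m"
proof (cases "\<bar>x\<bar> \<le> 1")
  case True
  then have "\<bar>x\<bar> ^ k \<le> 1" by (simp add: power_le_one)
  then show ?thesis by (simp add: add_increasing2)
next
  case False
  then have "\<bar>x\<bar> ^ k \<le> \<bar>x\<bar> ^ m" using assms by (intro power_increasing) auto
  then show ?thesis by simp
qed

context prob_space
begin

lemma indep_vars_expectation_mult:
  fixes X :: "nat \<Rightarrow> 'a \<Rightarrow> real" and f :: "real \<Rightarrow> real" and g :: "(nat \<Rightarrow> real) \<Rightarrow> real"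
  assumes ind: "indep_vars (\<lambda>_. borel) X I" and a: "a \<in> I" and S: "S \<subseteq> I" "a \<notin> S"
    and f: "f \<in> borel_measurable borel"
    and g: "g \<in> borel_measurable (PiM S (\<lambda>_. borel))"
    and G: "\<And>\<omega>. \<omega> \<in> space M \<Longrightarrow> G \<omega> = g (restrict (\<lambda>i. X i \<omega>) S)"
    and int_f: "integrable M (\<lambda>\<omega>. f (X a \<omega>))" and int_G: "integrable M G"
  shows "expectation (\<lambda>\<omega>. f (X a \<omega>) * G \<omega>) = expectation (\<lambda>\<omega>. f (X a \<omega>)) * expectation G"
proof -
  let ?G = "g \<circ> (\<lambda>\<omega>. restrict (\<lambda>i. X i \<omega>) S)"
  have "indep_var (PiM {a} (\<lambda>_. borel)) (\<lambda>\<omega>. restrict (\<lambda>i. X i \<omega>) {a})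
          (PiM S (\<lambda>_. borel)) (\<lambda>\<omega>. restrict (\<lambda>i. X i \<omega>) S)"
    by (rule indep_var_restrict[OF ind]) (use a S in auto)
  then have "indep_var borel ((\<lambda>h. f (h a)) \<circ> (\<lambda>\<omega>. restrict (\<lambda>i. X i \<omega>) {a})) borel ?G"
    by (rule indep_var_compose) (use f g in measurable)
  then have indep: "indep_var borel (\<lambda>\<omega>. f (X a \<omega>)) borel ?G"
    by (simp add: comp_def)
  have eq_G: "expectation (\<lambda>\<omega>. F \<omega> * G \<omega>) = expectation (\<lambda>\<omega>. F \<omega> * ?G \<omega>)" for F
    by (rule Bochner_Integration.integral_cong) (auto simp: G)
  have "integrable M ?G"
    using int_G by (rule Bochner_Integration.integrable_cong[THEN iffD1, rotated 2]) (auto simp: G)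
  then have "expectation (\<lambda>\<omega>. f (X a \<omega>) * ?G \<omega>) = expectation (\<lambda>\<omega>. f (X a \<omega>)) * expectation ?G"
    using indep int_f by (intro indep_var_lebesgue_integral) (auto simp: comp_def)
  then show ?thesis
    using eq_G[of "\<lambda>_. 1"] eq_G[of "\<lambda>\<omega>. f (X a \<omega>)"] by (simp add: comp_def)
qed

lemma expectation_sum_sq_orthogonal:
  fixes \<xi> :: "nat \<Rightarrow> 'a \<Rightarrow> real"
  assumes fin: "finite I"
    and int: "\<And>i k. i \<in> I \<Longrightarrow> k \<in> I \<Longrightarrow> integrable M (\<lambda>\<omega>. \<xi> i \<omega> * \<xi> k \<omega>)"
    and orth: "\<And>i k. i \<in> I \<Longrightarrow> k \<in> I \<Longrightarrow> i \<noteq> k \<Longrightarrow> expectation (\<lambda>\<omega>. \<xi> i \<omega> * \<xi> k \<omega>) = 0"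
  shows "expectation (\<lambda>\<omega>. (\<Sum>i\<in>I. \<xi> i \<omega>)\<^sup>2) = (\<Sum>i\<in>I. expectation (\<lambda>\<omega>. (\<xi> i \<omega>)\<^sup>2))"
proof -
  have "expectation (\<lambda>\<omega>. (\<Sum>i\<in>I. \<xi> i \<omega>)\<^sup>2) = expectation (\<lambda>\<omega>. \<Sum>i\<in>I. \<Sum>k\<in>I. \<xi> i \<omega> * \<xi> k \<omega>)"
    by (simp add: power2_eq_square sum_product)
  also have "\<dots> = (\<Sum>i\<in>I. \<Sum>k\<in>I. expectation (\<lambda>\<omega>. \<xi> i \<omega> * \<xi> k \<omega>))"
    using int by (simp add: Bochner_Integration.integral_sum integrable_sum)
  also have "\<dots> = (\<Sum>i\<in>I. \<Sum>k\<in>I. if k = i then expectation (\<lambda>\<omega>. (\<xi> i \<omega>)\<^sup>2) else 0)"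
    by (intro sum.cong refl) (auto simp: orth power2_eq_square)
  finally show ?thesis
    using fin by simp
qed

end

locale centered_iid = prob_space +
  fixes X :: "nat \<Rightarrow> 'a \<Rightarrow> real"
  assumes indep: "indep_vars (\<lambda>_. borel) X {1..}"
    and measurable_X [measurable]: "\<And>i. X i \<in> borel_measurable M"
    and identically_distributed: "\<And>i. i \<ge> 1 \<Longrightarrow> distr M borel (X i) = distr M borel (X 1)"
    and integrable_fourth_power: "integrable M (\<lambda>\<omega>. (X 1 \<omega>) ^ 4)"
    and mean_zero: "expectation (X 1) = 0"
begin

definition second_moment :: real where
  "second_moment = expectation (\<lambda>\<omega>. (X 1 \<omega>)\<^sup>2)"

definition fourth_moment :: real where
  "fourth_moment = expectation (\<lambda>\<omega>. (X 1 \<omega>) ^ 4)"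

definition sample_variance :: "nat \<Rightarrow> 'a \<Rightarrow> real" where
  "sample_variance n \<omega> = (1 / (real n - 1)) * (\<Sum>i=1..n. (X i \<omega> - (1 / real n) * (\<Sum>k=1..n. X k \<omega>))\<^sup>2)"

lemma integrable_comp_X_iff:
  fixes f :: "real \<Rightarrow> real"
  assumes "i \<ge> 1" and [measurable]: "f \<in> borel_measurable borel"
  shows "integrable M (\<lambda>\<omega>. f (X i \<omega>)) \<longleftrightarrow> integrable M (\<lambda>\<omega>. f (X 1 \<omega>))"
proof -
  have "integrable M (\<lambda>\<omega>. f (X i \<omega>)) \<longleftrightarrow> integrable (distr M borel (X i)) f"
    by (rule integrable_distr_eq[symmetric]) auto
  also have "\<dots> \<longleftrightarrow> integrable M (\<lambda>\<omega>. f (X 1 \<omega>))"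
    unfolding identically_distributed[OF assms(1)] by (rule integrable_distr_eq) auto
  finally show ?thesis .
qed

lemma expectation_comp_X:
  fixes f :: "real \<Rightarrow> real"
  assumes "i \<ge> 1" and [measurable]: "f \<in> borel_measurable borel"
  shows "expectation (\<lambda>\<omega>. f (X i \<omega>)) = expectation (\<lambda>\<omega>. f (X 1 \<omega>))"
proof -
  have "expectation (\<lambda>\<omega>. f (X i \<omega>)) = integral\<^sup>L (distr M borel (X i)) f"
    by (rule integral_distr[symmetric]) auto
  also have "\<dots> = expectation (\<lambda>\<omega>. f (X 1 \<omega>))"
    unfolding identically_distributed[OF assms(1)] by (rule integral_distr) auto
  finally show ?thesis .
qed

lemma integrable_power_X:
  assumes "i \<ge> 1" and "k \<le> 4"
  shows "integrable M (\<lambda>\<omega>. (X i \<omega>) ^ k)"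
proof -
  have "integrable M (\<lambda>\<omega>. (X 1 \<omega>) ^ k)"
  proof (rule Bochner_Integration.integrable_bound)
    show "integrable M (\<lambda>\<omega>. 1 + (X 1 \<omega>) ^ 4)"
      using integrable_fourth_power by simp
    show "AE \<omega> in M. norm ((X 1 \<omega>) ^ k) \<le> norm (1 + (X 1 \<omega>) ^ 4)"
      using abs_power_le_one_plus_power[OF assms(2)] by (simp add: power_abs power_even_abs)
  qed simp
  then show ?thesis
    using integrable_comp_X_iff[OF assms(1), of "\<lambda>x. x ^ k"] by simp
qed

lemma expectation_X: "i \<ge> 1 \<Longrightarrow> expectation (X i) = 0"
  using expectation_comp_X[of i "\<lambda>x. x"] mean_zero by simp

lemma expectation_X_sq: "i \<ge> 1 \<Longrightarrow> expectation (\<lambda>\<omega>. (X i \<omega>)\<^sup>2) = second_moment"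
  using expectation_comp_X[of i "\<lambda>x. x\<^sup>2"] by (simp add: second_moment_def)

lemma expectation_X_fourth: "i \<ge> 1 \<Longrightarrow> expectation (\<lambda>\<omega>. (X i \<omega>) ^ 4) = fourth_moment"
  using expectation_comp_X[of i "\<lambda>x. x ^ 4"] by (simp add: fourth_moment_def)

lemma second_moment_nonneg: "0 \<le> second_moment"
  unfolding second_moment_def by simp

text \<open>All products needed below are dominated by multiples of the square of this envelope, whose
  integrability only requires fourth moments.\<close>

definition envelope :: "nat \<Rightarrow> 'a \<Rightarrow> real" where
  "envelope n \<omega> = 1 + (\<Sum>i=1..n. (X i \<omega>)\<^sup>2)"

lemma envelope_ge_one: "1 \<le> envelope n \<omega>"
  unfolding envelope_def by (simp add: sum_nonneg)

lemma square_le_envelope: "i \<in> {1..n} \<Longrightarrow> (X i \<omega>)\<^sup>2 \<le> envelope n \<omega>"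
  unfolding envelope_def using member_le_sum[of i "{1..n}" "\<lambda>i. (X i \<omega>)\<^sup>2"] by simp

lemma abs_mult_le_envelope:
  assumes "i \<in> {1..n}" "k \<in> {1..n}"
  shows "\<bar>X i \<omega> * X k \<omega>\<bar> \<le> envelope n \<omega>"
proof -
  have "2 * \<bar>X i \<omega> * X k \<omega>\<bar> \<le> (X i \<omega>)\<^sup>2 + (X k \<omega>)\<^sup>2"
    using sum_squares_bound[of "\<bar>X i \<omega>\<bar>" "\<bar>X k \<omega>\<bar>"] by (simp add: abs_mult mult.assoc)
  then show ?thesis
    using square_le_envelope[OF assms(1), of \<omega>] square_le_envelope[OF assms(2), of \<omega>] by linarith
qed

lemma abs_le_envelope:
  assumes "i \<in> {1..n}"
  shows "\<bar>X i \<omega>\<bar> \<le> envelope n \<omega>"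
  using abs_power_le_one_plus_power[of 1 2 "X i \<omega>"] member_le_sum[OF assms, of "\<lambda>i. (X i \<omega>)\<^sup>2"]
  by (simp add: envelope_def)

lemma integrable_envelope_sq: "integrable M (\<lambda>\<omega>. (envelope n \<omega>)\<^sup>2)"
proof -
  have "integrable M (\<lambda>\<omega>. (X i \<omega>)\<^sup>2 * (X k \<omega>)\<^sup>2)" if "i \<in> {1..n}" "k \<in> {1..n}" for i k
  proof (rule Bochner_Integration.integrable_bound)
    show "integrable M (\<lambda>\<omega>. (X i \<omega>) ^ 4 + (X k \<omega>) ^ 4)"
      using that by (auto intro!: Bochner_Integration.integrable_add integrable_power_X)
    show "AE \<omega> in M. norm ((X i \<omega>)\<^sup>2 * (X k \<omega>)\<^sup>2) \<le> norm ((X i \<omega>) ^ 4 + (X k \<omega>) ^ 4)"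
    proof (intro AE_I2)
      fix \<omega>
      have "2 * ((X i \<omega>)\<^sup>2 * (X k \<omega>)\<^sup>2) \<le> (X i \<omega>) ^ 4 + (X k \<omega>) ^ 4"
        using sum_squares_bound[of "(X i \<omega>)\<^sup>2" "(X k \<omega>)\<^sup>2"] by (simp add: mult.assoc)
      moreover have "0 \<le> (X i \<omega>)\<^sup>2 * (X k \<omega>)\<^sup>2" by simp
      ultimately have "(X i \<omega>)\<^sup>2 * (X k \<omega>)\<^sup>2 \<le> (X i \<omega>) ^ 4 + (X k \<omega>) ^ 4" by linarith
      then show "norm ((X i \<omega>)\<^sup>2 * (X k \<omega>)\<^sup>2) \<le> norm ((X i \<omega>) ^ 4 + (X k \<omega>) ^ 4)"
        by simp
    qed
  qed simp
  moreover have "(\<lambda>\<omega>. (envelope n \<omega>)\<^sup>2)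
      = (\<lambda>\<omega>. 1 + 2 * (\<Sum>i=1..n. (X i \<omega>)\<^sup>2) + (\<Sum>i=1..n. \<Sum>k=1..n. (X i \<omega>)\<^sup>2 * (X k \<omega>)\<^sup>2))"
    by (simp add: envelope_def power2_eq_square[of "1 + _"] sum_product algebra_simps)
  ultimately show ?thesis
    by (auto intro!: Bochner_Integration.integrable_add integrable_mult_right
        Bochner_Integration.integrable_sum integrable_power_X)
qed

lemma integrable_mult_envelope_bounded:
  fixes F G :: "'a \<Rightarrow> real"
  assumes [measurable]: "F \<in> borel_measurable M" "G \<in> borel_measurable M"
    and F: "\<And>\<omega>. \<bar>F \<omega>\<bar> \<le> c * envelope n \<omega>" and G: "\<And>\<omega>. \<bar>G \<omega>\<bar> \<le> d * envelope n \<omega>"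
  shows "integrable M (\<lambda>\<omega>. F \<omega> * G \<omega>)"
proof (rule Bochner_Integration.integrable_bound)
  show "integrable M (\<lambda>\<omega>. c * d * (envelope n \<omega>)\<^sup>2)"
    using integrable_envelope_sq by simp
  show "AE \<omega> in M. norm (F \<omega> * G \<omega>) \<le> norm (c * d * (envelope n \<omega>)\<^sup>2)"
  proof (intro AE_I2)
    fix \<omega>
    have "0 \<le> c * envelope n \<omega>" "0 \<le> d * envelope n \<omega>"
      using F[of \<omega>] G[of \<omega>] by (meson abs_ge_zero order_trans)+
    then have "0 \<le> c" "0 \<le> d"
      using envelope_ge_one[of n \<omega>] by (simp_all add: zero_le_mult_iff)
    moreover have "\<bar>F \<omega>\<bar> * \<bar>G \<omega>\<bar> \<le> (c * envelope n \<omega>) * (d * envelope n \<omega>)"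
      using F[of \<omega>] G[of \<omega>] by (intro mult_mono) auto
    ultimately show "norm (F \<omega> * G \<omega>) \<le> norm (c * d * (envelope n \<omega>)\<^sup>2)"
      by (simp add: abs_mult power2_eq_square algebra_simps)
  qed
qed simp

definition centered_square :: "nat \<Rightarrow> 'a \<Rightarrow> real" where
  "centered_square i \<omega> = (X i \<omega>)\<^sup>2 - second_moment"

definition lower_sum :: "nat \<Rightarrow> 'a \<Rightarrow> real" where
  "lower_sum i \<omega> = (\<Sum>k\<in>{1..<i}. X k \<omega>)"

definition cross_term :: "nat \<Rightarrow> 'a \<Rightarrow> real" where
  "cross_term i \<omega> = X i \<omega> * lower_sum i \<omega>"

lemma measurable_centered_square [measurable]: "centered_square i \<in> borel_measurable M"
  unfolding centered_square_def by measurable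

lemma measurable_lower_sum [measurable]: "lower_sum i \<in> borel_measurable M"
  unfolding lower_sum_def by measurable

lemma measurable_cross_term [measurable]: "cross_term i \<in> borel_measurable M"
  unfolding cross_term_def by measurable

lemma abs_centered_square_le:
  assumes "i \<in> {1..n}"
  shows "\<bar>centered_square i \<omega>\<bar> \<le> (1 + second_moment) * envelope n \<omega>"
proof -
  have "\<bar>centered_square i \<omega>\<bar> \<le> (X i \<omega>)\<^sup>2 + second_moment"
    unfolding centered_square_def abs_le_iff using second_moment_nonneg zero_le_power2[of "X i \<omega>"] by linarith
  also have "\<dots> \<le> envelope n \<omega> + second_moment * envelope n \<omega>"
    using square_le_envelope[OF assms, of \<omega>] envelope_ge_one[of n \<omega>] second_moment_nonneg
      mult_left_mono[of 1 "envelope n \<omega>" second_moment]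
    by linarith
  finally show ?thesis by (simp add: algebra_simps)
qed

lemma abs_lower_sum_le:
  assumes "i \<in> {1..n}"
  shows "\<bar>lower_sum i \<omega>\<bar> \<le> real n * envelope n \<omega>"
proof -
  have "\<bar>lower_sum i \<omega>\<bar> \<le> real (card {1..<i}) * envelope n \<omega>"
    unfolding lower_sum_def by (rule abs_sum_le_card_mult) (use assms abs_le_envelope in auto)
  also have "\<dots> \<le> real n * envelope n \<omega>"
    using assms envelope_ge_one[of n \<omega>] by (intro mult_right_mono) auto
  finally show ?thesis .
qed

lemma abs_cross_term_le:
  assumes "i \<in> {1..n}"
  shows "\<bar>cross_term i \<omega>\<bar> \<le> real n * envelope n \<omega>"
proof -
  have "\<bar>cross_term i \<omega>\<bar> = \<bar>\<Sum>k\<in>{1..<i}. X i \<omega> * X k \<omega>\<bar>"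
    by (simp add: cross_term_def lower_sum_def sum_distrib_left)
  also have "\<dots> \<le> real (card {1..<i}) * envelope n \<omega>"
    by (rule abs_sum_le_card_mult) (use assms abs_mult_le_envelope in auto)
  also have "\<dots> \<le> real n * envelope n \<omega>"
    using assms envelope_ge_one[of n \<omega>] by (intro mult_right_mono) auto
  finally show ?thesis .
qed

lemma measurable_component:
  "l \<in> S \<Longrightarrow> (\<lambda>h::nat \<Rightarrow> real. h l) \<in> borel_measurable (PiM S (\<lambda>_. borel))"
  using measurable_component_singleton[of l S "\<lambda>_. borel"] by simp

lemma measurable_sum_components:
  "T \<subseteq> S \<Longrightarrow> (\<lambda>h::nat \<Rightarrow> real. \<Sum>l\<in>T. h l) \<in> borel_measurable (PiM S (\<lambda>_. borel))"
  by (rule borel_measurable_sum) (auto intro: measurable_component)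

lemma expectation_X_mult_X:
  assumes "i \<ge> 1" "k \<ge> 1" "i \<noteq> k"
  shows "expectation (\<lambda>\<omega>. X i \<omega> * X k \<omega>) = 0"
proof -
  have "expectation (\<lambda>\<omega>. X i \<omega> * X k \<omega>) = expectation (X i) * expectation (X k)"
    using indep_vars_expectation_mult[OF indep, where a=i and S="{k}" and f="\<lambda>x. x"
        and g="\<lambda>h. h k" and G="X k"] integrable_power_X[of _ 1] assms
    by (simp add: measurable_component)
  then show ?thesis
    using expectation_X assms by simp
qed

lemma expectation_lower_sum_sq:
  assumes "i \<ge> 1"
  shows "expectation (\<lambda>\<omega>. (lower_sum i \<omega>)\<^sup>2) = real (i - 1) * second_moment"
proof -
  have "expectation (\<lambda>\<omega>. (lower_sum i \<omega>)\<^sup>2) = (\<Sum>k\<in>{1..<i}. expectation (\<lambda>\<omega>. (X k \<omega>)\<^sup>2))"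
    unfolding lower_sum_def
  proof (rule expectation_sum_sq_orthogonal)
    show "integrable M (\<lambda>\<omega>. X k \<omega> * X l \<omega>)" if "k \<in> {1..<i}" "l \<in> {1..<i}" for k l
      by (rule integrable_mult_envelope_bounded[where n=i and c=1 and d=1])
        (use that abs_le_envelope in auto)
  qed (auto simp: expectation_X_mult_X)
  then show ?thesis
    by (simp add: expectation_X_sq)
qed

lemma expectation_centered_square_mult:
  assumes "i \<ge> 1" "k \<ge> 1" "i \<noteq> k"
  shows "expectation (\<lambda>\<omega>. centered_square i \<omega> * centered_square k \<omega>) = 0"
proof -
  have int: "integrable M (\<lambda>\<omega>. (X l \<omega>)\<^sup>2 - second_moment)" if "l \<ge> 1" for l
    using integrable_power_X[OF that, of 2] by simp
  have "expectation (\<lambda>\<omega>. (\<lambda>x. x\<^sup>2 - second_moment) (X i \<omega>) * centered_square k \<omega>)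
      = expectation (\<lambda>\<omega>. (\<lambda>x. x\<^sup>2 - second_moment) (X i \<omega>)) * expectation (centered_square k)"
    by (rule indep_vars_expectation_mult[OF indep, where S="{k}" and g="\<lambda>h. (h k)\<^sup>2 - second_moment"])
      (use assms int[of i] int[of k] in \<open>auto simp: centered_square_def[abs_def] measurable_component\<close>)
  moreover have "expectation (centered_square k) = 0"
    using integrable_power_X[OF assms(2), of 2] expectation_X_sq[OF assms(2)]
    by (simp add: centered_square_def[abs_def] prob_space)
  ultimately show ?thesis
    by (simp add: centered_square_def)
qed

lemma expectation_centered_square_sq:
  assumes "i \<ge> 1"
  shows "expectation (\<lambda>\<omega>. (centered_square i \<omega>)\<^sup>2) = fourth_moment - second_moment\<^sup>2"
proof -
  have "(\<lambda>\<omega>. (centered_square i \<omega>)\<^sup>2)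
      = (\<lambda>\<omega>. (X i \<omega>) ^ 4 - 2 * second_moment * (X i \<omega>)\<^sup>2 + second_moment\<^sup>2)"
    by (auto simp: centered_square_def power2_eq_square power4_eq_xxxx algebra_simps)
  then show ?thesis
    using integrable_power_X[OF assms, of 4] integrable_power_X[OF assms, of 2]
      expectation_X_fourth[OF assms] expectation_X_sq[OF assms]
    by (simp add: prob_space power2_eq_square)
qed

lemma expectation_cross_term_sq:
  assumes "i \<ge> 1"
  shows "expectation (\<lambda>\<omega>. (cross_term i \<omega>)\<^sup>2) = real (i - 1) * second_moment\<^sup>2"
proof -
  have int_sq: "integrable M (\<lambda>\<omega>. (lower_sum i \<omega>)\<^sup>2)"
    using integrable_mult_envelope_bounded[where n=i, OF _ _ abs_lower_sum_le abs_lower_sum_le] assms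
    by (simp add: power2_eq_square)
  have "expectation (\<lambda>\<omega>. (\<lambda>x. x\<^sup>2) (X i \<omega>) * (lower_sum i \<omega>)\<^sup>2)
      = expectation (\<lambda>\<omega>. (\<lambda>x. x\<^sup>2) (X i \<omega>)) * expectation (\<lambda>\<omega>. (lower_sum i \<omega>)\<^sup>2)"
  proof (rule indep_vars_expectation_mult[OF indep, where S="{1..<i}" and g="\<lambda>h. (\<Sum>l\<in>{1..<i}. h l)\<^sup>2"])
    show "(\<lambda>h::nat \<Rightarrow> real. (\<Sum>l\<in>{1..<i}. h l)\<^sup>2) \<in> borel_measurable (PiM {1..<i} (\<lambda>_. borel))"
      by (intro borel_measurable_power measurable_sum_components) auto
  qed (use assms int_sq integrable_power_X[OF assms, of 2] in \<open>auto simp: lower_sum_def\<close>)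
  then have "expectation (\<lambda>\<omega>. (cross_term i \<omega>)\<^sup>2) = second_moment * (real (i - 1) * second_moment)"
    using expectation_X_sq[OF assms] expectation_lower_sum_sq[OF assms]
    by (simp add: cross_term_def power_mult_distrib)
  then show ?thesis
    by (simp add: power2_eq_square)
qed

lemma expectation_cross_term_mult:
  assumes "1 \<le> i" "i < k"
  shows "expectation (\<lambda>\<omega>. cross_term i \<omega> * cross_term k \<omega>) = 0"
proof -
  have k: "k \<in> {1..k}" "i \<in> {1..k}" using assms by auto
  have "expectation (\<lambda>\<omega>. (\<lambda>x. x) (X k \<omega>) * (cross_term i \<omega> * lower_sum k \<omega>))
      = expectation (\<lambda>\<omega>. (\<lambda>x. x) (X k \<omega>)) * expectation (\<lambda>\<omega>. cross_term i \<omega> * lower_sum k \<omega>)"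
  proof (rule indep_vars_expectation_mult[OF indep, where S="{1..<k}"
        and g="\<lambda>h. h i * (\<Sum>l\<in>{1..<i}. h l) * (\<Sum>l\<in>{1..<k}. h l)"])
    show "(\<lambda>h::nat \<Rightarrow> real. h i * (\<Sum>l\<in>{1..<i}. h l) * (\<Sum>l\<in>{1..<k}. h l))
        \<in> borel_measurable (PiM {1..<k} (\<lambda>_. borel))"
      using assms by (intro borel_measurable_times measurable_sum_components measurable_component) auto
    show "integrable M (\<lambda>\<omega>. cross_term i \<omega> * lower_sum k \<omega>)"
      by (rule integrable_mult_envelope_bounded[where n=k, OF _ _ abs_cross_term_le abs_lower_sum_le])
        (use k in auto)
  qed (use assms integrable_power_X[of k 1] in \<open>auto simp: lower_sum_def cross_term_def\<close>)
  then show ?thesis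
    using expectation_X[of k] assms by (simp add: cross_term_def mult_ac)
qed

lemma expectation_sum_centered_square_sq:
  "expectation (\<lambda>\<omega>. (\<Sum>i=1..n. centered_square i \<omega>)\<^sup>2) = real n * (fourth_moment - second_moment\<^sup>2)"
proof -
  have "expectation (\<lambda>\<omega>. (\<Sum>i=1..n. centered_square i \<omega>)\<^sup>2)
      = (\<Sum>i=1..n. expectation (\<lambda>\<omega>. (centered_square i \<omega>)\<^sup>2))"
  proof (rule expectation_sum_sq_orthogonal)
    show "integrable M (\<lambda>\<omega>. centered_square i \<omega> * centered_square k \<omega>)" if "i \<in> {1..n}" "k \<in> {1..n}" for i k
      by (rule integrable_mult_envelope_bounded[OF _ _ abs_centered_square_le abs_centered_square_le])
        (use that in auto)
  qed (auto simp: expectation_centered_square_mult)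
  then show ?thesis
    by (simp add: expectation_centered_square_sq)
qed

lemma expectation_sum_cross_term_sq:
  "expectation (\<lambda>\<omega>. (\<Sum>i=1..n. cross_term i \<omega>)\<^sup>2) = second_moment\<^sup>2 * (real n * (real n - 1) / 2)"
proof -
  have "expectation (\<lambda>\<omega>. (\<Sum>i=1..n. cross_term i \<omega>)\<^sup>2) = (\<Sum>i=1..n. expectation (\<lambda>\<omega>. (cross_term i \<omega>)\<^sup>2))"
  proof (rule expectation_sum_sq_orthogonal)
    show "integrable M (\<lambda>\<omega>. cross_term i \<omega> * cross_term k \<omega>)" if "i \<in> {1..n}" "k \<in> {1..n}" for i k
      by (rule integrable_mult_envelope_bounded[OF _ _ abs_cross_term_le abs_cross_term_le])
        (use that in auto)
    show "expectation (\<lambda>\<omega>. cross_term i \<omega> * cross_term k \<omega>) = 0"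
      if "i \<in> {1..n}" "k \<in> {1..n}" "i \<noteq> k" for i k
      using that expectation_cross_term_mult[of i k] expectation_cross_term_mult[of k i]
      by (cases "i < k") (auto simp: mult.commute)
  qed simp
  also have "\<dots> = second_moment\<^sup>2 * (\<Sum>i=1..n. real (i - 1))"
    by (simp add: expectation_cross_term_sq sum_distrib_left mult.commute)
  finally show ?thesis
    by (simp only: sum_pred_atLeastAtMost)
qed

definition diagonal_mean :: "nat \<Rightarrow> 'a \<Rightarrow> real" where
  "diagonal_mean n \<omega> = (1 / real n) * (\<Sum>i=1..n. centered_square i \<omega>)"

definition cross_mean :: "nat \<Rightarrow> 'a \<Rightarrow> real" where
  "cross_mean n \<omega> = (2 / (real n * (real n - 1))) * (\<Sum>i=1..n. cross_term i \<omega>)"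

lemma measurable_diagonal_mean [measurable]: "diagonal_mean n \<in> borel_measurable M"
  unfolding diagonal_mean_def[abs_def] by measurable

lemma measurable_cross_mean [measurable]: "cross_mean n \<in> borel_measurable M"
  unfolding cross_mean_def[abs_def] by measurable

lemma sample_variance_sub_second_moment:
  assumes "n \<ge> 2"
  shows "sample_variance n \<omega> - second_moment = diagonal_mean n \<omega> - cross_mean n \<omega>"
proof -
  have squares: "(\<Sum>i=1..n. centered_square i \<omega>) = (\<Sum>i=1..n. (X i \<omega>)\<^sup>2) - real n * second_moment"
    by (simp add: centered_square_def sum_subtractf)
  show ?thesis
    using assms unfolding sample_variance_def sample_variance_eq[OF assms] diagonal_mean_def squares
    by (simp add: cross_mean_def cross_term_def lower_sum_def field_simps)
qed

lemma abs_diagonal_mean_le: "\<bar>diagonal_mean n \<omega>\<bar> \<le> (1 + second_moment) * envelope n \<omega>"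
  using abs_sum_le_card_mult[of "{1..n}" "\<lambda>i. centered_square i \<omega>", OF abs_centered_square_le]
    envelope_ge_one[of n \<omega>] second_moment_nonneg
  by (cases "n = 0") (simp_all add: diagonal_mean_def abs_mult field_simps)

lemma abs_cross_mean_le:
  "\<bar>cross_mean n \<omega>\<bar> \<le> (2 / (real n * (real n - 1)) * real n * real n) * envelope n \<omega>"
proof -
  have c: "0 \<le> 2 / (real n * (real n - 1))"
    by (cases n) auto
  have sum_le: "\<bar>\<Sum>i=1..n. cross_term i \<omega>\<bar> \<le> real n * (real n * envelope n \<omega>)"
    using abs_sum_le_card_mult[of "{1..n}" "\<lambda>i. cross_term i \<omega>", OF abs_cross_term_le] by simp
  have "\<bar>cross_mean n \<omega>\<bar> = 2 / (real n * (real n - 1)) * \<bar>\<Sum>i=1..n. cross_term i \<omega>\<bar>"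
    by (simp only: cross_mean_def abs_mult abs_of_nonneg[OF c])
  also have "\<dots> \<le> 2 / (real n * (real n - 1)) * (real n * (real n * envelope n \<omega>))"
    by (rule mult_left_mono[OF sum_le c])
  finally show ?thesis
    by (simp only: mult.assoc)
qed

lemma integrable_diagonal_mean_sq: "integrable M (\<lambda>\<omega>. (diagonal_mean n \<omega>)\<^sup>2)"
  using integrable_mult_envelope_bounded[OF _ _ abs_diagonal_mean_le abs_diagonal_mean_le]
  by (simp add: power2_eq_square)

lemma integrable_cross_mean_sq: "integrable M (\<lambda>\<omega>. (cross_mean n \<omega>)\<^sup>2)"
  using integrable_mult_envelope_bounded[OF _ _ abs_cross_mean_le abs_cross_mean_le]
  by (simp add: power2_eq_square)

lemma expectation_diagonal_mean_sq:
  "n \<ge> 1 \<Longrightarrow> expectation (\<lambda>\<omega>. (diagonal_mean n \<omega>)\<^sup>2) = (fourth_moment - second_moment\<^sup>2) / real n"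
  using expectation_sum_centered_square_sq[of n]
  by (simp add: diagonal_mean_def power_mult_distrib power2_eq_square)

lemma expectation_cross_mean_sq:
  assumes "n \<ge> 2"
  shows "expectation (\<lambda>\<omega>. (cross_mean n \<omega>)\<^sup>2) = 2 * second_moment\<^sup>2 / (real n * (real n - 1))"
proof -
  have "expectation (\<lambda>\<omega>. (cross_mean n \<omega>)\<^sup>2)
      = (2 / (real n * (real n - 1)))\<^sup>2 * (second_moment\<^sup>2 * (real n * (real n - 1) / 2))"
    unfolding cross_mean_def power_mult_distrib
    by (simp only: integral_mult_right_zero expectation_sum_cross_term_sq)
  also have "\<dots> = 2 * second_moment\<^sup>2 / (real n * (real n - 1))"
  proof -
    have "(2 / m)\<^sup>2 * (second_moment\<^sup>2 * (m / 2)) = 2 * second_moment\<^sup>2 / m" if "m \<noteq> 0" for m :: real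
      using that by (simp add: power2_eq_square field_simps)
    moreover have "real n * (real n - 1) \<noteq> 0" using assms by simp
    ultimately show ?thesis by blast
  qed
  finally show ?thesis .
qed

lemma sample_variance_mean_square_error:
  assumes n: "n \<ge> 2"
  shows "integrable M (\<lambda>\<omega>. (sample_variance n \<omega> - second_moment)\<^sup>2)"
    and "expectation (\<lambda>\<omega>. (sample_variance n \<omega> - second_moment)\<^sup>2)
      \<le> 2 * (fourth_moment - second_moment\<^sup>2) / real n + 4 * second_moment\<^sup>2 / (real n * (real n - 1))"
proof -
  let ?A = "diagonal_mean n" and ?B = "cross_mean n"
  have int: "integrable M (\<lambda>\<omega>. 2 * (?A \<omega>)\<^sup>2 + 2 * (?B \<omega>)\<^sup>2)"
    using integrable_diagonal_mean_sq integrable_cross_mean_sq by simp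
  \<comment> \<open>cruder than the exact variance, but avoids the mixed moments of the two sums\<close>
  have le: "(?A \<omega> - ?B \<omega>)\<^sup>2 \<le> 2 * (?A \<omega>)\<^sup>2 + 2 * (?B \<omega>)\<^sup>2" for \<omega>
    using zero_le_power2[of "?A \<omega> + ?B \<omega>"] by (simp add: power2_eq_square algebra_simps)
  show int_error: "integrable M (\<lambda>\<omega>. (sample_variance n \<omega> - second_moment)\<^sup>2)"
    unfolding sample_variance_sub_second_moment[OF n]
    by (rule Bochner_Integration.integrable_bound[OF int]) (use le in auto)
  have "expectation (\<lambda>\<omega>. (sample_variance n \<omega> - second_moment)\<^sup>2)
      \<le> expectation (\<lambda>\<omega>. 2 * (?A \<omega>)\<^sup>2 + 2 * (?B \<omega>)\<^sup>2)"
    using int_error int le by (intro integral_mono) (auto simp: sample_variance_sub_second_moment[OF n])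
  also have "\<dots> = 2 * ((fourth_moment - second_moment\<^sup>2) / real n)
      + 2 * (2 * second_moment\<^sup>2 / (real n * (real n - 1)))"
    using integrable_diagonal_mean_sq integrable_cross_mean_sq n
    by (simp add: expectation_diagonal_mean_sq expectation_cross_mean_sq)
  finally show "expectation (\<lambda>\<omega>. (sample_variance n \<omega> - second_moment)\<^sup>2)
      \<le> 2 * (fourth_moment - second_moment\<^sup>2) / real n + 4 * second_moment\<^sup>2 / (real n * (real n - 1))"
    by simp
qed

lemma second_moment_sq_le_fourth_moment: "second_moment\<^sup>2 \<le> fourth_moment"
proof -
  have "0 \<le> expectation (\<lambda>\<omega>. (centered_square 1 \<omega>)\<^sup>2)" by simp
  then show ?thesis using expectation_centered_square_sq[of 1] by linarith
qed

lemma prob_sample_variance_deviation: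
  assumes n: "n \<ge> 2" and \<eta>: "\<eta> > 0" and pos: "second_moment > 0"
    and kurtosis: "fourth_moment \<le> C * second_moment\<^sup>2"
  shows "prob {\<omega> \<in> space M. \<not> \<bar>sample_variance n \<omega> - second_moment\<bar> \<le> \<eta> * second_moment}
    \<le> 4 * C / (real n * \<eta>\<^sup>2)"
proof -
  let ?v = second_moment
  have nr: "real n \<ge> 2" using n by simp
  have "1 * ?v\<^sup>2 \<le> C * ?v\<^sup>2"
    using second_moment_sq_le_fourth_moment kurtosis by simp
  then have C: "C \<ge> 1" using pos by (simp add: mult_le_cancel_right)
  have "4 * ?v\<^sup>2 / (real n * (real n - 1)) \<le> 4 * ?v\<^sup>2 / real n"
    using nr by (intro divide_left_mono) auto
  moreover have "2 * (fourth_moment - ?v\<^sup>2) / real n \<le> 2 * (C * ?v\<^sup>2 - ?v\<^sup>2) / real n"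
    using kurtosis nr by (intro divide_right_mono) auto
  moreover have "2 * (C * ?v\<^sup>2 - ?v\<^sup>2) / real n + 4 * ?v\<^sup>2 / real n \<le> 4 * C * ?v\<^sup>2 / real n"
    using C nr mult_right_mono[OF C, of "?v\<^sup>2"] by (simp add: field_simps)
  ultimately have mse: "expectation (\<lambda>\<omega>. (sample_variance n \<omega> - ?v)\<^sup>2) \<le> 4 * C * ?v\<^sup>2 / real n"
    using sample_variance_mean_square_error(2)[OF n] by linarith
  have "prob {\<omega> \<in> space M. \<not> \<bar>sample_variance n \<omega> - ?v\<bar> \<le> \<eta> * ?v}
      \<le> prob {\<omega> \<in> space M. \<bar>sample_variance n \<omega> - ?v\<bar> \<ge> \<eta> * ?v}"
    by (intro finite_measure_mono) (auto simp: sample_variance_def)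
  also have "\<dots> \<le> expectation (\<lambda>\<omega>. (sample_variance n \<omega> - ?v)\<^sup>2) / (\<eta> * ?v)\<^sup>2"
    using sample_variance_mean_square_error(1)[OF n] \<eta> pos
    by (intro second_moment_method) (auto simp: sample_variance_def)
  also have "\<dots> \<le> (4 * C * ?v\<^sup>2 / real n) / (\<eta> * ?v)\<^sup>2"
    using mse by (intro divide_right_mono) auto
  also have "\<dots> = 4 * C / (real n * \<eta>\<^sup>2)"
    using pos \<eta> nr by (simp add: field_simps power2_eq_square)
  finally show ?thesis .
qed

end

section \<open>Stability of the weight recursion\<close>

definition within_factor :: "real \<Rightarrow> real \<Rightarrow> real \<Rightarrow> bool" where
  "within_factor \<rho> x y \<longleftrightarrow> x / \<rho> \<le> y \<and> y \<le> \<rho> * x"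

lemma within_factor_refl: "1 \<le> \<rho> \<Longrightarrow> 0 \<le> x \<Longrightarrow> within_factor \<rho> x x"
  unfolding within_factor_def using mult_right_mono[of 1 \<rho> x] by (simp add: divide_le_eq mult.commute)

lemma within_factor_mult_left:
  "0 \<le> f \<Longrightarrow> within_factor \<rho> x y \<Longrightarrow> within_factor \<rho> (f * x) (f * y)"
  unfolding within_factor_def
  using mult_left_mono[of "x / \<rho>" y f] mult_left_mono[of y "\<rho> * x" f] by (simp add: mult_ac)

lemma within_factor_min:
  assumes "0 < \<rho>" "within_factor \<rho> a a'" "within_factor \<rho> b b'"
  shows "within_factor \<rho> (min a b) (min a' b')"
proof -
  have "min a b / \<rho> = min (a / \<rho>) (b / \<rho>)" "\<rho> * min a b = min (\<rho> * a) (\<rho> * b)"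
    using assms(1) by (simp_all add: min_divide_distrib_right min_mult_distrib_left)
  then show ?thesis
    using assms(2,3) by (auto simp: within_factor_def min_def)
qed

lemma within_factor_sqrt:
  assumes "within_factor \<rho> x y" "0 \<le> x" "0 < \<rho>"
  shows "within_factor (sqrt \<rho>) (sqrt x) (sqrt y)"
  using assms real_sqrt_le_mono[of "x / \<rho>" y] real_sqrt_le_mono[of y "\<rho> * x"]
  by (simp add: within_factor_def real_sqrt_divide real_sqrt_mult)

lemma within_factor_mono:
  assumes "within_factor \<rho> x y" "\<rho> \<le> \<rho>'" "0 \<le> x" "0 < \<rho>"
  shows "within_factor \<rho>' x y"
proof -
  have "x / \<rho>' \<le> x / \<rho>" "\<rho> * x \<le> \<rho>' * x"
    using assms by (simp_all add: divide_left_mono mult_right_mono)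
  then show ?thesis
    using assms(1) by (auto simp: within_factor_def)
qed

lemma wsq_nonneg:
  assumes "0 \<le> S" "\<And>j. j \<ge> 1 \<Longrightarrow> 0 \<le> s j"
  shows "0 \<le> wsq \<sigma> e S s j"
proof (induction j)
  case (Suc k)
  then show ?case using assms by (cases k) simp_all
qed simp

text \<open>Both branches of the minimum in the recursion are monotone in the previous weight and in
  the ratio S / s j, so a common multiplicative perturbation of these ratios propagates to all
  weights without growing.\<close>

lemma wsq_within_factor:
  assumes \<rho>: "1 \<le> \<rho>"
    and ratio: "\<And>j. 1 \<le> j \<Longrightarrow> j \<le> m \<Longrightarrow> within_factor \<rho> (S / s j) (S' / s' j)"
  shows "1 \<le> j \<Longrightarrow> j \<le> m \<Longrightarrow> within_factor \<rho> (wsq \<sigma> e S s j) (wsq \<sigma> e S' s' j)"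
proof (induction j)
  case (Suc k)
  show ?case
  proof (cases k)
    case 0
    then show ?thesis
      using within_factor_min[OF _ ratio within_factor_refl] \<rho> Suc.prems by simp
  next
    case (Suc k')
    let ?j = "Suc (Suc k')"
    have "within_factor \<rho> (real ?j powr (-(1 + e)) * (S / s ?j)) (real ?j powr (-(1 + e)) * (S' / s' ?j))"
      using Suc Suc.prems by (intro within_factor_mult_left ratio) auto
    moreover have "within_factor \<rho> ((\<sigma> (Suc k'))\<^sup>2 / (\<sigma> ?j)\<^sup>2 * wsq \<sigma> e S s (Suc k'))
        ((\<sigma> (Suc k'))\<^sup>2 / (\<sigma> ?j)\<^sup>2 * wsq \<sigma> e S' s' (Suc k'))"
      using Suc Suc.prems Suc.IH by (intro within_factor_mult_left) auto
    ultimately show ?thesis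
      using \<rho> Suc by (simp add: within_factor_min mult.commute times_divide_eq_left)
  qed
qed simp

lemma wsq_mult_le:
  assumes "1 \<le> j" "0 < s j"
  shows "wsq \<sigma> e S s j * s j \<le> S * real j powr (-(1 + e))"
proof (cases j)
  case (Suc k)
  have "wsq \<sigma> e S s j \<le> real j powr (-(1 + e)) * S / s j"
    using Suc by (cases k) simp_all
  then have "wsq \<sigma> e S s j * s j \<le> real j powr (-(1 + e)) * S / s j * s j"
    using assms(2) by (intro mult_right_mono) auto
  then show ?thesis
    using assms(2) by (simp add: mult.commute)
qed (use assms in simp)

lemma measurable_wsq [measurable]:
  assumes [measurable]: "S \<in> borel_measurable M" "\<And>j. s j \<in> borel_measurable M"
  shows "(\<lambda>\<omega>. wsq \<sigma> e (S \<omega>) (\<lambda>j. s j \<omega>) j) \<in> borel_measurable M"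
proof (induction j)
  case (Suc k)
  then show ?case by (cases k) simp_all
qed simp

lemma ratio_within_factor:
  fixes V v S s :: real
  assumes "0 < v" "0 \<le> V" "81/100 * V \<le> S" "S \<le> 11/10 * V" "9/10 * v \<le> s" "s \<le> 11/10 * v"
  shows "within_factor (3/2) (V / v) (S / s)"
proof -
  have s: "0 < s" using assms by linarith
  have "V * s \<le> 11/10 * (V * v)" "9/10 * (V * v) \<le> V * s"
    using mult_left_mono[of s "11/10 * v" V] mult_left_mono[of "9/10 * v" s V] assms
    by (simp_all add: algebra_simps)
  moreover have "81/100 * (V * v) \<le> S * v" "S * v \<le> 11/10 * (V * v)"
    using mult_right_mono[of "81/100 * V" S v] mult_right_mono[of S "11/10 * V" v] assms
    by (simp_all add: algebra_simps)
  moreover have "0 \<le> V * v" using assms by simp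
  ultimately have "2 * (V * s) \<le> 3 * (S * v)" "2 * (S * v) \<le> 3 * (V * s)"
    by linarith+
  moreover have "V / v / (3/2) \<le> S / s \<longleftrightarrow> 2 * (V * s) \<le> 3 * (S * v)"
    "S / s \<le> 3/2 * (V / v) \<longleftrightarrow> 2 * (S * v) \<le> 3 * (V * s)"
    using assms(1) s by (simp_all add: field_simps)
  ultimately show ?thesis
    unfolding within_factor_def by blast
qed

lemma weighted_sum_within_bounds:
  fixes w w' v s :: "nat \<Rightarrow> real"
  assumes "\<And>j. j \<in> A \<Longrightarrow> within_factor (3/2) (w j) (w' j)"
    and "\<And>j. j \<in> A \<Longrightarrow> 0 \<le> w j" "\<And>j. j \<in> A \<Longrightarrow> 0 \<le> v j"
    and "\<And>j. j \<in> A \<Longrightarrow> \<bar>s j - v j\<bar> \<le> 1/10 * v j"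
  shows "3/5 * (\<Sum>j\<in>A. w j * v j) \<le> (\<Sum>j\<in>A. w' j * s j)"
    and "(\<Sum>j\<in>A. w' j * s j) \<le> 33/20 * (\<Sum>j\<in>A. w j * v j)"
proof -
  have bounds: "w j / (3/2) \<le> w' j" "w' j \<le> 3/2 * w j" "9/10 * v j \<le> s j" "s j \<le> 11/10 * v j"
    if "j \<in> A" for j
    using assms(1,4)[OF that] unfolding within_factor_def abs_le_iff by linarith+
  have nonneg: "0 \<le> w' j" "0 \<le> s j" if "j \<in> A" for j
    using bounds[OF that] assms(2,3)[OF that] by (simp_all add: field_simps)
  have "3/5 * (\<Sum>j\<in>A. w j * v j) = (\<Sum>j\<in>A. (w j / (3/2)) * (9/10 * v j))"
    by (simp add: sum_distrib_left algebra_simps)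
  also have "\<dots> \<le> (\<Sum>j\<in>A. w' j * s j)"
    using bounds assms(2,3) nonneg by (intro sum_mono mult_mono) auto
  finally show "3/5 * (\<Sum>j\<in>A. w j * v j) \<le> (\<Sum>j\<in>A. w' j * s j)" .
  have "(\<Sum>j\<in>A. w' j * s j) \<le> (\<Sum>j\<in>A. (3/2 * w j) * (11/10 * v j))"
    using bounds assms(2,3) nonneg by (intro sum_mono mult_mono) auto
  also have "\<dots> = 33/20 * (\<Sum>j\<in>A. w j * v j)"
    by (simp add: sum_distrib_left algebra_simps)
  finally show "(\<Sum>j\<in>A. w' j * s j) \<le> 33/20 * (\<Sum>j\<in>A. w j * v j)" .
qed

section \<open>The sampling model\<close>

lemma mcut_le_powr: "real (mcut e n) \<le> real n powr (1 - e)"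
  by (simp add: mcut_def of_int_floor_le)

lemma mcut_div_le:
  assumes "n \<ge> 1"
  shows "real (mcut e n) / real n \<le> real n powr (-e)"
proof -
  have "real (mcut e n) / real n \<le> real n powr (1 - e) / real n"
    using mcut_le_powr[of e n] by (intro divide_right_mono) auto
  also have "\<dots> = real n powr (-e)"
    using assms by (simp add: powr_diff powr_minus_divide)
  finally show ?thesis .
qed

lemma filterlim_mcut_sequentially:
  assumes "e < 1"
  shows "filterlim (mcut e) sequentially sequentially"
proof -
  have "filterlim (\<lambda>n. real n powr (1 - e)) at_top sequentially"
    using assms by real_asymp
  then show ?thesis
    unfolding mcut_def[abs_def]
    by (intro filterlim_compose[OF filterlim_nat_sequentially] filterlim_compose[OF filterlim_floor_sequentially])
qed

lemma sample_var_eq_centered: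
  fixes Y :: "nat \<Rightarrow> 'a \<Rightarrow> 'y::real_inner"
  shows "sample_var Y u n j \<omega>
    = (1 / (real n - 1)) * (\<Sum>i=1..n. ((Y i \<omega> - c) \<bullet> u j - (1 / real n) * (\<Sum>k=1..n. (Y k \<omega> - c) \<bullet> u j))\<^sup>2)"
proof (cases "n = 0")
  case False
  then have "(Y i \<omega> - sample_mean Y n \<omega>) \<bullet> u j
      = (Y i \<omega> - c) \<bullet> u j - (1 / real n) * (\<Sum>k=1..n. (Y k \<omega> - c) \<bullet> u j)" for i
    by (simp add: sample_mean_def inner_diff_left inner_sum_left sum_subtractf field_simps)
  then show ?thesis
    by (simp add: sample_var_def)
qed (simp add: sample_var_def)

lemma sample_var_nonneg: "n \<ge> 1 \<Longrightarrow> 0 \<le> sample_var Y u n j \<omega>"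
  unfolding sample_var_def by (intro mult_nonneg_nonneg sum_nonneg) auto

locale weighted_sampling = prob_space M
  for M :: "'a measure" +
  fixes Y :: "nat \<Rightarrow> 'a \<Rightarrow> 'y::{real_inner, banach, second_countable_topology}"
    and yhat :: 'y and u :: "nat \<Rightarrow> 'y" and \<sigma> :: "nat \<Rightarrow> real"
    and C Cp p \<epsilon>1 \<epsilon>2 :: real
  assumes u_orth: "\<And>i j. i \<ge> 1 \<Longrightarrow> j \<ge> 1 \<Longrightarrow> u i \<bullet> u j = (if i = j then 1 else 0)"
    and span_dense: "\<And>y \<epsilon>. \<epsilon> > 0 \<Longrightarrow> \<exists>c N. norm (y - (\<Sum>k=1..N. c k *\<^sub>R u k)) < \<epsilon>"
    and \<sigma>_pos: "\<And>j. j \<ge> 1 \<Longrightarrow> \<sigma> j > 0"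
    and Y_meas: "\<And>i. i \<ge> 1 \<Longrightarrow> Y i \<in> borel_measurable M"
    and Y_indep: "indep_vars (\<lambda>_. borel) Y {1..}"
    and Y_ident: "\<And>i. i \<ge> 1 \<Longrightarrow> distr M borel (Y i) = distr M borel (Y 1)"
    and Y_int: "integrable M (Y 1)"
    and Y_mean: "expectation (Y 1) = yhat"
    and v_pos: "\<And>j. j \<ge> 1 \<Longrightarrow> 0 < expectation (\<lambda>\<omega>. ((Y 1 \<omega> - yhat) \<bullet> u j)\<^sup>2)"
    and v_bound: "\<And>j. j \<ge> 1 \<Longrightarrow> expectation (\<lambda>\<omega>. ((Y 1 \<omega> - yhat) \<bullet> u j)\<^sup>2) \<le> Cp * real j powr (-p)"
    and m4_int: "\<And>j. j \<ge> 1 \<Longrightarrow> integrable M (\<lambda>\<omega>. ((Y 1 \<omega> - yhat) \<bullet> u j) ^ 4)"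
    and m4_bound: "\<And>j. j \<ge> 1 \<Longrightarrow> expectation (\<lambda>\<omega>. ((Y 1 \<omega> - yhat) \<bullet> u j) ^ 4)
                     \<le> C * (expectation (\<lambda>\<omega>. ((Y 1 \<omega> - yhat) \<bullet> u j)\<^sup>2))\<^sup>2"
    and p: "p > 1"
    and \<epsilon>1: "0 < \<epsilon>1" "\<epsilon>1 < 1"
    and \<epsilon>2: "0 < \<epsilon>2"
begin

definition coord_var :: "nat \<Rightarrow> real" where
  "coord_var j = expectation (\<lambda>\<omega>. ((Y 1 \<omega> - yhat) \<bullet> u j)\<^sup>2)"

definition total_var :: real where
  "total_var = expectation (\<lambda>\<omega>. (norm (Y 1 \<omega> - yhat))\<^sup>2)"

text \<open>Index 0 is not a sample; the coordinate is set to 0 there only to make it measurable.\<close>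

definition coordinate :: "nat \<Rightarrow> nat \<Rightarrow> 'a \<Rightarrow> real" where
  "coordinate j i \<omega> = (if i = 0 then 0 else (Y i \<omega> - yhat) \<bullet> u j)"

lemma coord_var_pos: "j \<ge> 1 \<Longrightarrow> 0 < coord_var j"
  using v_pos by (simp add: coord_var_def)

lemma coord_var_nonneg: "0 \<le> coord_var j"
  by (simp add: coord_var_def)

lemma measurable_coordinate [measurable]: "coordinate j i \<in> borel_measurable M"
proof (cases "i = 0")
  case False
  have [measurable]: "Y i \<in> borel_measurable M" using False Y_meas by simp
  show ?thesis using False unfolding coordinate_def[abs_def] by simp
qed (simp add: coordinate_def[abs_def])

lemma coordinate_one: "coordinate j 1 = (\<lambda>\<omega>. (Y 1 \<omega> - yhat) \<bullet> u j)"
  by (simp add: coordinate_def[abs_def])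

lemma centered_iid_coordinate:
  assumes j: "j \<ge> 1"
  shows "centered_iid M (coordinate j)"
proof
  have "indep_vars (\<lambda>_. borel) (\<lambda>i \<omega>. (\<lambda>y. (y - yhat) \<bullet> u j) (Y i \<omega>)) {1..}"
    by (rule indep_vars_compose2[OF Y_indep]) measurable
  then show "indep_vars (\<lambda>_. borel) (coordinate j) {1..}"
    by (rule indep_vars_cong[THEN iffD1, rotated 3]) (auto simp: coordinate_def)
  show "coordinate j i \<in> borel_measurable M" for i
    by measurable
  show "distr M borel (coordinate j i) = distr M borel (coordinate j 1)" if i: "i \<ge> 1" for i
  proof -
    have eq: "coordinate j k = (\<lambda>y. (y - yhat) \<bullet> u j) \<circ> Y k" if "k \<ge> 1" for k
      using that by (auto simp: coordinate_def)
    have "distr M borel (coordinate j i) = distr (distr M borel (Y i)) borel (\<lambda>y. (y - yhat) \<bullet> u j)"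
      unfolding eq[OF i] using Y_meas[OF i] by (subst distr_distr) auto
    also have "\<dots> = distr M borel (coordinate j 1)"
      unfolding Y_ident[OF i] eq[OF order.refl] using Y_meas[of 1] by (subst distr_distr) auto
    finally show ?thesis .
  qed
  show "integrable M (\<lambda>\<omega>. (coordinate j 1 \<omega>) ^ 4)"
    unfolding coordinate_one by (rule m4_int[OF j])
  have "expectation (\<lambda>\<omega>. Y 1 \<omega> - yhat) = 0"
    using Y_int Y_mean by (simp add: prob_space)
  then show "expectation (coordinate j 1) = 0"
    unfolding coordinate_one using Y_int by simp
qed

lemma sample_var_eq_coordinate:
  "sample_var Y u n j \<omega>
    = (1 / (real n - 1)) * (\<Sum>i=1..n. (coordinate j i \<omega> - (1 / real n) * (\<Sum>k=1..n. coordinate j k \<omega>))\<^sup>2)"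
  unfolding sample_var_eq_centered[where c=yhat] by (simp add: coordinate_def)

lemma measurable_sample_var [measurable]: "sample_var Y u n j \<in> borel_measurable M"
  unfolding sample_var_eq_coordinate[abs_def] by measurable

lemma measurable_rand_weight [measurable]: "rand_weight \<sigma> \<epsilon>1 \<epsilon>2 Y u n j \<in> borel_measurable M"
  unfolding rand_weight_def[abs_def] weight_def sample_total_def by measurable

lemma measurable_delta' [measurable]: "delta' \<sigma> \<epsilon>1 \<epsilon>2 Y u n \<in> borel_measurable M"
  unfolding delta'_def[abs_def] by measurable

lemma kurtosis_ge_one: "C \<ge> 1"
proof -
  interpret X: centered_iid M "coordinate 1"
    by (rule centered_iid_coordinate) simp
  have "1 * (coord_var 1)\<^sup>2 \<le> C * (coord_var 1)\<^sup>2"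
    using X.second_moment_sq_le_fourth_moment m4_bound[of 1]
    unfolding X.second_moment_def X.fourth_moment_def coordinate_one coord_var_def by simp
  then show ?thesis
    using coord_var_pos[of 1] by (simp add: mult_le_cancel_right)
qed

lemma prob_sample_var_deviation:
  assumes "n \<ge> 2" "j \<ge> 1" "\<eta> > 0"
  shows "prob {\<omega> \<in> space M. \<not> \<bar>sample_var Y u n j \<omega> - coord_var j\<bar> \<le> \<eta> * coord_var j}
    \<le> 4 * C / (real n * \<eta>\<^sup>2)"
proof -
  interpret X: centered_iid M "coordinate j"
    by (rule centered_iid_coordinate) fact
  have v: "X.second_moment = coord_var j"
    unfolding X.second_moment_def coordinate_one coord_var_def ..
  have "X.fourth_moment \<le> C * X.second_moment\<^sup>2"
    using m4_bound[OF assms(2)] unfolding X.second_moment_def X.fourth_moment_def coordinate_one .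
  then show ?thesis
    using X.prob_sample_variance_deviation[OF assms(1,3)] coord_var_pos[OF assms(2)]
    by (simp add: v X.sample_variance_def sample_var_eq_coordinate)
qed

definition good_event :: "nat \<Rightarrow> real \<Rightarrow> 'a set" where
  "good_event n \<eta> = {\<omega> \<in> space M. \<forall>j\<in>{1..mcut \<epsilon>1 n}. \<bar>sample_var Y u n j \<omega> - coord_var j\<bar> \<le> \<eta> * coord_var j}"

lemma prob_good_event:
  assumes n: "n \<ge> 2" and \<eta>: "\<eta> > 0"
  shows "prob (good_event n \<eta>) \<ge> 1 - 4 * C / \<eta>\<^sup>2 * real n powr (-\<epsilon>1)"
proof -
  define m where "m = mcut \<epsilon>1 n"
  define B where "B j = {\<omega> \<in> space M. \<not> \<bar>sample_var Y u n j \<omega> - coord_var j\<bar> \<le> \<eta> * coord_var j}" for j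
  have B [measurable]: "B j \<in> events" for j
    unfolding B_def by measurable
  have "prob (\<Union>j\<in>{1..m}. B j) \<le> (\<Sum>j\<in>{1..m}. prob (B j))"
    by (rule finite_measure_subadditive_finite) auto
  also have "\<dots> \<le> (\<Sum>j\<in>{1..m}. 4 * C / (real n * \<eta>\<^sup>2))"
    unfolding B_def using prob_sample_var_deviation[OF n _ \<eta>] by (intro sum_mono) auto
  also have "\<dots> = real m / real n * (4 * C / \<eta>\<^sup>2)"
    by simp
  also have "\<dots> \<le> real n powr (-\<epsilon>1) * (4 * C / \<eta>\<^sup>2)"
    using mcut_div_le[of n \<epsilon>1] n kurtosis_ge_one by (intro mult_right_mono) (auto simp: m_def)
  finally have "prob (\<Union>j\<in>{1..m}. B j) \<le> 4 * C / \<eta>\<^sup>2 * real n powr (-\<epsilon>1)"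
    by (simp add: mult.commute)
  moreover have "good_event n \<eta> = space M - (\<Union>j\<in>{1..m}. B j)"
    by (auto simp: good_event_def B_def m_def)
  ultimately show ?thesis
    by (simp add: prob_compl)
qed

lemma total_var_sums: "(\<lambda>i. coord_var (Suc i)) sums total_var"
proof -
  let ?f = "\<lambda>i \<omega>. ((Y 1 \<omega> - yhat) \<bullet> u (Suc i))\<^sup>2"
  have pointwise: "(\<lambda>i. ?f i \<omega>) sums (norm (Y 1 \<omega> - yhat))\<^sup>2" for \<omega>
    using parseval_dense_span[OF u_orth span_dense, of "Y 1 \<omega> - yhat"]
      sum.atLeast1_atMost_eq[where g="\<lambda>j. ((Y 1 \<omega> - yhat) \<bullet> u j)\<^sup>2"]
    by (simp add: sums_def)
  have int: "integrable M (?f i)" for i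
  proof -
    interpret X: centered_iid M "coordinate (Suc i)"
      by (rule centered_iid_coordinate) simp
    show ?thesis
      using X.integrable_power_X[of 1 2] unfolding coordinate_one by simp
  qed
  have summable: "summable (\<lambda>i. coord_var (Suc i))"
  proof (rule summable_comparison_test)
    show "\<exists>N. \<forall>i\<ge>N. norm (coord_var (Suc i)) \<le> Cp * real (Suc i) powr (-p)"
      using v_bound coord_var_nonneg by (auto simp: coord_var_def simp del: of_nat_Suc)
    have "summable (\<lambda>i. real i powr (-p))"
      using p by (simp add: summable_real_powr_iff)
    then show "summable (\<lambda>i. Cp * real (Suc i) powr (-p))"
      by (intro summable_mult) (subst summable_Suc_iff)
  qed
  have "(\<Sum>i. coord_var (Suc i)) = (\<integral>\<omega>. (\<Sum>i. ?f i \<omega>) \<partial>M)"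
    unfolding coord_var_def using int summable pointwise
    by (intro integral_suminf[symmetric]) (auto simp: coord_var_def intro: sums_summable)
  also have "\<dots> = total_var"
    unfolding total_var_def using sums_unique[OF pointwise] by simp
  finally show ?thesis
    using summable_sums[OF summable] by simp
qed

lemma total_var_pos: "0 < total_var"
  using suminf_pos[OF sums_summable[OF total_var_sums]] coord_var_pos sums_unique[OF total_var_sums]
  by simp

definition weight_sq :: "nat \<Rightarrow> real" where
  "weight_sq j = wsq \<sigma> \<epsilon>2 total_var coord_var j"

definition weighted_total :: real where
  "weighted_total = (\<Sum>i. weight_sq (Suc i) * coord_var (Suc i))"

lemma weight_sq_nonneg: "0 \<le> weight_sq j"
  unfolding weight_sq_def using total_var_pos coord_var_nonneg by (intro wsq_nonneg) auto

lemma weighted_total_sums: "(\<lambda>i. weight_sq (Suc i) * coord_var (Suc i)) sums weighted_total"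
proof -
  have "summable (\<lambda>i. weight_sq (Suc i) * coord_var (Suc i))"
  proof (rule summable_comparison_test)
    show "\<exists>N. \<forall>i\<ge>N. norm (weight_sq (Suc i) * coord_var (Suc i)) \<le> total_var * real (Suc i) powr (-(1 + \<epsilon>2))"
    proof (intro exI allI impI)
      fix i :: nat
      have "weight_sq (Suc i) * coord_var (Suc i) \<le> total_var * real (Suc i) powr (-(1 + \<epsilon>2))"
        unfolding weight_sq_def by (rule wsq_mult_le) (auto intro: coord_var_pos)
      then show "norm (weight_sq (Suc i) * coord_var (Suc i)) \<le> total_var * real (Suc i) powr (-(1 + \<epsilon>2))"
        using weight_sq_nonneg coord_var_nonneg by simp
    qed
    have "summable (\<lambda>i. real i powr (-(1 + \<epsilon>2)))"
      using \<epsilon>2 by (simp add: summable_real_powr_iff)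
    then show "summable (\<lambda>i. total_var * real (Suc i) powr (-(1 + \<epsilon>2)))"
      by (intro summable_mult) (subst summable_Suc_iff)
  qed
  then show ?thesis
    unfolding weighted_total_def by (rule summable_sums)
qed

lemma weighted_total_pos: "0 < weighted_total"
proof -
  have "0 < weight_sq 1"
    using total_var_pos coord_var_pos[of 1] \<sigma>_pos[of 1] by (simp add: weight_sq_def)
  then have "0 < weight_sq (Suc 0) * coord_var (Suc 0)"
    using coord_var_pos[of 1] by simp
  then show ?thesis
    using suminf_pos2[OF sums_summable[OF weighted_total_sums]] weight_sq_nonneg coord_var_nonneg
    by (simp add: weighted_total_def)
qed

lemma eventually_partial_sums_large:
  "eventually (\<lambda>n. 9/10 * total_var < (\<Sum>j=1..mcut \<epsilon>1 n. coord_var j)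
     \<and> weighted_total / 2 < (\<Sum>j=1..mcut \<epsilon>1 n. weight_sq j * coord_var j)) sequentially"
proof -
  have "(\<lambda>n. \<Sum>j=1..mcut \<epsilon>1 n. coord_var j) \<longlonglongrightarrow> total_var"
    by (rule filterlim_compose[OF sums_imp_tendsto_sum_atLeastAtMost[OF total_var_sums]
          filterlim_mcut_sequentially[OF \<epsilon>1(2)]])
  moreover have "(\<lambda>n. \<Sum>j=1..mcut \<epsilon>1 n. weight_sq j * coord_var j) \<longlonglongrightarrow> weighted_total"
    by (rule filterlim_compose[OF sums_imp_tendsto_sum_atLeastAtMost[OF weighted_total_sums]
          filterlim_mcut_sequentially[OF \<epsilon>1(2)]])
  ultimately show ?thesis
    using total_var_pos weighted_total_pos by (intro eventually_conj order_tendstoD(1)) auto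
qed

lemma rand_weight_sq_within_factor:
  assumes n: "n \<ge> 2" and good: "\<omega> \<in> good_event n (1/10)"
    and large: "9/10 * total_var < (\<Sum>j=1..mcut \<epsilon>1 n. coord_var j)"
    and j: "j \<in> {1..mcut \<epsilon>1 n}"
  shows "within_factor (3/2) (weight_sq j) (wsq \<sigma> \<epsilon>2 (sample_total \<epsilon>1 Y u n \<omega>) (\<lambda>j. sample_var Y u n j \<omega>) j)"
proof -
  define m where "m = mcut \<epsilon>1 n"
  define s where "s j = sample_var Y u n j \<omega>" for j
  have s: "9/10 * coord_var j \<le> s j" "s j \<le> 11/10 * coord_var j" if "j \<in> {1..m}" for j
    using good that unfolding good_event_def m_def s_def abs_le_iff by auto
  have S: "sample_total \<epsilon>1 Y u n \<omega> = (\<Sum>j=1..m. s j)"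
    by (simp add: sample_total_def m_def s_def)
  have "9/10 * (\<Sum>j=1..m. coord_var j) \<le> (\<Sum>j=1..m. s j)"
    "(\<Sum>j=1..m. s j) \<le> 11/10 * (\<Sum>j=1..m. coord_var j)"
    unfolding sum_distrib_left using s by (auto intro!: sum_mono)
  moreover have "(\<Sum>j=1..m. coord_var j) \<le> total_var"
    using sum_atLeastAtMost_le_sums[OF total_var_sums] coord_var_nonneg by blast
  ultimately have "81/100 * total_var \<le> (\<Sum>j=1..m. s j)" "(\<Sum>j=1..m. s j) \<le> 11/10 * total_var"
    using large unfolding m_def by linarith+
  then have "within_factor (3/2) (total_var / coord_var j) (sample_total \<epsilon>1 Y u n \<omega> / s j)"
    if "1 \<le> j" "j \<le> m" for j
    using that s[of j] total_var_pos coord_var_pos[of j] unfolding S by (intro ratio_within_factor) auto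
  then show ?thesis
    unfolding weight_sq_def s_def[symmetric]
    using j by (intro wsq_within_factor[where m=m]) (auto simp: m_def)
qed

lemma sqrt_delta'_eq:
  assumes "n \<ge> 1"
  shows "sqrt (real n) * delta' \<sigma> \<epsilon>1 \<epsilon>2 Y u n \<omega>
    = sqrt (\<Sum>j=1..mcut \<epsilon>1 n. wsq \<sigma> \<epsilon>2 (sample_total \<epsilon>1 Y u n \<omega>) (\<lambda>j. sample_var Y u n j \<omega>) j
        * sample_var Y u n j \<omega>)"
proof -
  have "0 \<le> wsq \<sigma> \<epsilon>2 (sample_total \<epsilon>1 Y u n \<omega>) (\<lambda>j. sample_var Y u n j \<omega>) j" for j
    using assms by (intro wsq_nonneg) (auto simp: sample_total_def sample_var_nonneg sum_nonneg)
  then show ?thesis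
    using assms by (simp add: delta'_def rand_weight_def weight_def real_sqrt_mult[symmetric])
qed

lemma good_event_rand_weight_close:
  assumes "n \<ge> 2" "\<omega> \<in> good_event n (1/10)" "9/10 * total_var < (\<Sum>j=1..mcut \<epsilon>1 n. coord_var j)"
    and "j \<in> {1..mcut \<epsilon>1 n}"
  shows "weight \<sigma> \<epsilon>2 total_var coord_var j / 2 \<le> rand_weight \<sigma> \<epsilon>1 \<epsilon>2 Y u n j \<omega>
    \<and> rand_weight \<sigma> \<epsilon>1 \<epsilon>2 Y u n j \<omega> \<le> 2 * weight \<sigma> \<epsilon>2 total_var coord_var j"
proof -
  let ?w' = "wsq \<sigma> \<epsilon>2 (sample_total \<epsilon>1 Y u n \<omega>) (\<lambda>j. sample_var Y u n j \<omega>) j"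
  have "within_factor (sqrt (3/2)) (sqrt (weight_sq j)) (sqrt ?w')"
    using rand_weight_sq_within_factor[OF assms] weight_sq_nonneg by (intro within_factor_sqrt) auto
  then have "within_factor 2 (sqrt (weight_sq j)) (sqrt ?w')"
    by (rule within_factor_mono) (use weight_sq_nonneg in \<open>auto simp: real_sqrt_le_iff[of "3/2" 4, simplified]\<close>)
  then show ?thesis
    by (simp add: within_factor_def weight_def weight_sq_def rand_weight_def)
qed

lemma good_event_delta'_close:
  assumes n: "n \<ge> 2" and good: "\<omega> \<in> good_event n (1/10)"
    and large: "9/10 * total_var < (\<Sum>j=1..mcut \<epsilon>1 n. coord_var j)"
      "weighted_total / 2 < (\<Sum>j=1..mcut \<epsilon>1 n. weight_sq j * coord_var j)"
  shows "\<bar>sqrt (real n) * delta' \<sigma> \<epsilon>1 \<epsilon>2 Y u n \<omega> - sqrt weighted_total\<bar> \<le> sqrt weighted_total / 2"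
proof -
  define m where "m = mcut \<epsilon>1 n"
  define w' where "w' j = wsq \<sigma> \<epsilon>2 (sample_total \<epsilon>1 Y u n \<omega>) (\<lambda>j. sample_var Y u n j \<omega>) j" for j
  have w': "within_factor (3/2) (weight_sq j) (w' j)" if "j \<in> {1..m}" for j
    unfolding w'_def using rand_weight_sq_within_factor[OF n good large(1)] that by (simp add: m_def)
  have "(\<Sum>j=1..m. weight_sq j * coord_var j) \<le> weighted_total"
    using sum_atLeastAtMost_le_sums[OF weighted_total_sums] weight_sq_nonneg coord_var_nonneg by auto
  moreover have "3/5 * (\<Sum>j=1..m. weight_sq j * coord_var j) \<le> (\<Sum>j=1..m. w' j * sample_var Y u n j \<omega>)"
    "(\<Sum>j=1..m. w' j * sample_var Y u n j \<omega>) \<le> 33/20 * (\<Sum>j=1..m. weight_sq j * coord_var j)"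
    using w' good weight_sq_nonneg coord_var_nonneg
    by (intro weighted_sum_within_bounds; force simp: good_event_def m_def)+
  ultimately have "sqrt (weighted_total / 4) \<le> sqrt (\<Sum>j=1..m. w' j * sample_var Y u n j \<omega>)"
    "sqrt (\<Sum>j=1..m. w' j * sample_var Y u n j \<omega>) \<le> sqrt (9/4 * weighted_total)"
    using large(2) weighted_total_pos unfolding m_def by (intro real_sqrt_le_mono; linarith)+
  moreover have "sqrt (weighted_total / 4) = sqrt weighted_total / 2"
    "sqrt (9/4 * weighted_total) = 3/2 * sqrt weighted_total"
    by (simp_all add: real_sqrt_divide real_sqrt_mult)
  moreover have "sqrt (real n) * delta' \<sigma> \<epsilon>1 \<epsilon>2 Y u n \<omega> = sqrt (\<Sum>j=1..m. w' j * sample_var Y u n j \<omega>)"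
    using n by (simp add: sqrt_delta'_eq w'_def m_def)
  ultimately show ?thesis
    unfolding abs_le_iff by linarith
qed

lemma tendsto_deviation_bound: "(\<lambda>n. 1 - 4 * C / \<eta>\<^sup>2 * real n powr (-\<epsilon>1)) \<longlonglongrightarrow> 1"
proof -
  have "(\<lambda>n. real n powr (-\<epsilon>1)) \<longlonglongrightarrow> 0"
    using \<epsilon>1 by (intro tendsto_neg_powr filterlim_real_sequentially) auto
  then have "(\<lambda>n. 1 - 4 * C / \<eta>\<^sup>2 * real n powr (-\<epsilon>1)) \<longlonglongrightarrow> 1 - 4 * C / \<eta>\<^sup>2 * 0"
    by (intro tendsto_intros)
  then show ?thesis by simp
qed

lemma prob_tendsto_one:
  assumes sets: "\<And>n. T n \<in> events"
    and contains: "\<And>n \<omega>. n \<ge> 2 \<Longrightarrow> 9/10 * total_var < (\<Sum>j=1..mcut \<epsilon>1 n. coord_var j)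
      \<Longrightarrow> weighted_total / 2 < (\<Sum>j=1..mcut \<epsilon>1 n. weight_sq j * coord_var j)
      \<Longrightarrow> \<omega> \<in> good_event n (1/10) \<Longrightarrow> \<omega> \<in> T n"
  shows "(\<lambda>n. prob (T n)) \<longlonglongrightarrow> 1"
proof (rule tendsto_sandwich)
  show "(\<lambda>n. 1 - 4 * C / (1/10)\<^sup>2 * real n powr (-\<epsilon>1)) \<longlonglongrightarrow> 1"
    by (rule tendsto_deviation_bound)
  show "eventually (\<lambda>n. 1 - 4 * C / (1/10)\<^sup>2 * real n powr (-\<epsilon>1) \<le> prob (T n)) sequentially"
    using eventually_partial_sums_large eventually_ge_at_top[of 2]
  proof eventually_elim
    case (elim n)
    then have "good_event n (1/10) \<subseteq> T n"
      using contains by (auto simp: good_event_def)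
    then have "prob (good_event n (1/10)) \<le> prob (T n)"
      using sets by (intro finite_measure_mono) auto
    then show ?case
      using prob_good_event[of n "1/10"] elim by linarith
  qed
qed (auto intro: tendsto_const)

lemma sqrt_sum_weight_sq:
  "sqrt (\<Sum>j. weight \<sigma> \<epsilon>2 total_var coord_var (Suc j) ^ 2 * coord_var (Suc j)) = sqrt weighted_total"
  using weight_sq_nonneg by (simp add: weight_def weight_sq_def weighted_total_def)

end

theorem mainTheorem6:
  fixes K :: "'x::{real_inner, banach, second_countable_topology} \<Rightarrow> 'y::{real_inner, banach, second_countable_topology}"
    and \<sigma> :: "nat \<Rightarrow> real" and e :: "nat \<Rightarrow> 'x" and u :: "nat \<Rightarrow> 'y"
    and M :: "'a measure" and Y :: "nat \<Rightarrow> 'a \<Rightarrow> 'y" and yhat :: 'y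
    and p q C Cp \<epsilon>1 \<epsilon>2 :: real
  assumes K_compact: "compact_linear_op K"
    and K_dense: "closure (range K) = UNIV"
    and e_orth: "\<And>i j. i \<ge> 1 \<Longrightarrow> j \<ge> 1 \<Longrightarrow> e i \<bullet> e j = (if i = j then 1 else 0)"
    and u_orth: "\<And>i j. i \<ge> 1 \<Longrightarrow> j \<ge> 1 \<Longrightarrow> u i \<bullet> u j = (if i = j then 1 else 0)"
    and \<sigma>_pos: "\<And>j. j \<ge> 1 \<Longrightarrow> \<sigma> j > 0"
    and \<sigma>_mono: "\<And>i j. 1 \<le> i \<Longrightarrow> i \<le> j \<Longrightarrow> \<sigma> j \<le> \<sigma> i"
    and \<sigma>_lim: "\<sigma> \<longlonglongrightarrow> 0"
    and svd: "\<And>x. ((\<lambda>j. (\<sigma> j * (x \<bullet> e j)) *\<^sub>R u j) has_sum K x) {1..}"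
    and M: "prob_space M"
    and Y_meas: "\<And>i. i \<ge> 1 \<Longrightarrow> Y i \<in> borel_measurable M"
    and Y_indep: "prob_space.indep_vars M (\<lambda>_. borel) Y {1..}"
    and Y_ident: "\<And>i. i \<ge> 1 \<Longrightarrow> distr M borel (Y i) = distr M borel (Y 1)"
    and Y_int: "integrable M (Y 1)"
    and Y_mean: "integral\<^sup>L M (Y 1) = yhat"
    and pq: "q > p - 1" "p - 1 > 0"
    and \<sigma>_rate: "\<exists>c1 c2. c1 > 0 \<and> c2 > 0 \<and>
                   (\<forall>j\<ge>1. c1 * real j powr (-q) \<le> (\<sigma> j)\<^sup>2 \<and> (\<sigma> j)\<^sup>2 \<le> c2 * real j powr (-q))"
    and v_pos: "\<And>j. j \<ge> 1 \<Longrightarrow> 0 < integral\<^sup>L M (\<lambda>\<omega>. ((Y 1 \<omega> - yhat) \<bullet> u j)\<^sup>2)"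
    and v_bound: "\<And>j. j \<ge> 1 \<Longrightarrow>
                   integral\<^sup>L M (\<lambda>\<omega>. ((Y 1 \<omega> - yhat) \<bullet> u j)\<^sup>2) \<le> Cp * real j powr (-p)"
    and m4_int: "\<And>j. j \<ge> 1 \<Longrightarrow> integrable M (\<lambda>\<omega>. ((Y 1 \<omega> - yhat) \<bullet> u j) ^ 4)"
    and m4_bound: "\<And>j. j \<ge> 1 \<Longrightarrow>
                   integral\<^sup>L M (\<lambda>\<omega>. ((Y 1 \<omega> - yhat) \<bullet> u j) ^ 4)
                     \<le> C * (integral\<^sup>L M (\<lambda>\<omega>. ((Y 1 \<omega> - yhat) \<bullet> u j)\<^sup>2))\<^sup>2"
    and \<epsilon>1: "0 < \<epsilon>1" "\<epsilon>1 < 1"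
    and \<epsilon>2: "0 < \<epsilon>2" "\<epsilon>2 < min 1 (p - 1)"
  shows
    "(let v = (\<lambda>j. integral\<^sup>L M (\<lambda>\<omega>. ((Y 1 \<omega> - yhat) \<bullet> u j)\<^sup>2));
          V = integral\<^sup>L M (\<lambda>\<omega>. (norm (Y 1 \<omega> - yhat))\<^sup>2);
          d = weight \<sigma> \<epsilon>2 V v;
          \<gamma> = sqrt (\<Sum>j. d (Suc j) ^ 2 * v (Suc j))
      in (\<forall>\<eta>>0. \<forall>n\<ge>2.
            measure M {\<omega> \<in> space M. \<forall>j\<in>{1..mcut \<epsilon>1 n}.
                 \<bar>sample_var Y u n j \<omega> - v j\<bar> \<le> \<eta> * v j}
              \<ge> 1 - 4 * C / \<eta>\<^sup>2 * real n powr (-\<epsilon>1))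
       \<and> (\<forall>\<eta>>0. (\<lambda>n. 1 - 4 * C / \<eta>\<^sup>2 * real n powr (-\<epsilon>1)) \<longlonglongrightarrow> 1)
       \<and> ((\<lambda>n. measure M {\<omega> \<in> space M. \<forall>j\<in>{1..mcut \<epsilon>1 n}.
                 d j / 2 \<le> rand_weight \<sigma> \<epsilon>1 \<epsilon>2 Y u n j \<omega>
                 \<and> rand_weight \<sigma> \<epsilon>1 \<epsilon>2 Y u n j \<omega> \<le> 2 * d j}) \<longlonglongrightarrow> 1)
       \<and> ((\<lambda>n. measure M {\<omega> \<in> space M.
                 \<bar>sqrt (real n) * delta' \<sigma> \<epsilon>1 \<epsilon>2 Y u n \<omega> - \<gamma>\<bar> \<le> \<gamma> / 2}) \<longlonglongrightarrow> 1))"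
proof -
  interpret weighted_sampling M Y yhat u \<sigma> C Cp p \<epsilon>1 \<epsilon>2
  proof (intro weighted_sampling.intro weighted_sampling_axioms.intro)
    show "p > 1" using pq(2) by simp
  qed (fact M u_orth span_approx_of_dense_range[OF K_dense svd] \<sigma>_pos Y_meas Y_indep Y_ident Y_int Y_mean
      v_pos v_bound m4_int m4_bound \<epsilon>1 \<epsilon>2(1))+
  have "(\<lambda>n. prob {\<omega> \<in> space M. \<forall>j\<in>{1..mcut \<epsilon>1 n}.
      weight \<sigma> \<epsilon>2 total_var coord_var j / 2 \<le> rand_weight \<sigma> \<epsilon>1 \<epsilon>2 Y u n j \<omega>
      \<and> rand_weight \<sigma> \<epsilon>1 \<epsilon>2 Y u n j \<omega> \<le> 2 * weight \<sigma> \<epsilon>2 total_var coord_var j}) \<longlonglongrightarrow> 1"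
    by (rule prob_tendsto_one) (use good_event_rand_weight_close in \<open>auto simp: good_event_def\<close>)
  moreover have "(\<lambda>n. prob {\<omega> \<in> space M.
      \<bar>sqrt (real n) * delta' \<sigma> \<epsilon>1 \<epsilon>2 Y u n \<omega> - sqrt weighted_total\<bar> \<le> sqrt weighted_total / 2}) \<longlonglongrightarrow> 1"
    by (rule prob_tendsto_one) (use good_event_delta'_close in \<open>auto simp: good_event_def\<close>)
  ultimately show ?thesis
    using prob_good_event tendsto_deviation_bound
    unfolding Let_def coord_var_def[symmetric] total_var_def[symmetric] sqrt_sum_weight_sq good_event_def
    by blast
qed

end
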